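(* Fix finite nonempty sets $A$ and $\Omega$, a prior $\mu_0$ on $\Omega$ with $\mu_0(\omega)>0$ for all $\omega$, and a finite message set $M$ with $|M|>\max\{|\Omega|,|A|\}$. Then there is a set of environments of Lebesgue measure one in $[0,1]^{2|A||\Omega|}$ such that, for every environment $(u_S,u_R)$ in this set, commitment is valuable if and only if committed Sender values randomization.
   Context: An environment is a pair $(u_S,u_R)$ of functions $A\times\Omega\to[0,1]$; the set of environments is identified with $[0,1]^{2|A||\Omega|}$. A messaging strategy is a map $\sigma:\Omega\to\Delta M$, written $\sigma(m|\omega)$. An action strategy is a map $\rho:M\to\Delta A$, written $\rho(a|m)$. For $i\in\{S,R\}$ let $U_i(\sigma,\rho)=\sum_{\omega,m,a}\mu_0(\omega)\sigma(m|\omega)\rho(a|m)u_i(a,\omega)$. A profile $(\sigma,\rho)$ is S-BR if $\sigma$ maximizes $U_S(\cdot,\rho)$ over all messaging strategies. It is R-BR if $\rho$ maximizes $U_R(\sigma,\cdot)$ over all action strategies. A persuasion profile is an R-BR profile, and the persuasion payoff is the maximum of $U_S$ over persuasion profiles. A cheap-talk equilibrium is a profile that is both S-BR and R-BR, and the cheap-talk payoff is the maximum of $U_S$ over cheap-talk equilibria. Commitment is valuable if the persuasion payoff is strictly greater than the cheap-talk payoff. A messaging strategy $\sigma$ is partitional if for every $\omega$ there is $m$ with $\sigma(m|\omega)=1$. The partitional persuasion payoff is the maximum of $U_S$ over persuasion profiles $(\sigma,\rho)$ with $\sigma$ partitional. Committed Sender values randomization if the persuasion payoff is strictly greater than the partitional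 persuasion payoff. *)

theory Defs
  imports "HOL-Analysis.Analysis"
begin

text \<open>Actions: type 'a, states: type 'w, messages: type 'm (all finite, nonempty as types).\<close>

definition messaging_strategy :: "('w::finite \<Rightarrow> 'm::finite \<Rightarrow> real) \<Rightarrow> bool" where
  "messaging_strategy \<sigma> \<longleftrightarrow> (\<forall>w m. 0 \<le> \<sigma> w m) \<and> (\<forall>w. (\<Sum>m\<in>UNIV. \<sigma> w m) = 1)"

definition action_strategy :: "('m::finite \<Rightarrow> 'a::finite \<Rightarrow> real) \<Rightarrow> bool" where
  "action_strategy \<rho> \<longleftrightarrow> (\<forall>m a. 0 \<le> \<rho> m a) \<and> (\<forall>m. (\<Sum>a\<in>UNIV. \<rho> m a) = 1)"

definition payoff :: "('w::finite \<Rightarrow> real) \<Rightarrow> ('a::finite \<Rightarrow> 'w \<Rightarrow> real)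
    \<Rightarrow> ('w \<Rightarrow> 'm::finite \<Rightarrow> real) \<Rightarrow> ('m \<Rightarrow> 'a \<Rightarrow> real) \<Rightarrow> real" where
  "payoff \<mu>0 u \<sigma> \<rho> = (\<Sum>w\<in>UNIV. \<Sum>m\<in>UNIV. \<Sum>a\<in>UNIV. \<mu>0 w * \<sigma> w m * \<rho> m a * u a w)"

definition S_BR :: "('w::finite \<Rightarrow> real) \<Rightarrow> ('a::finite \<Rightarrow> 'w \<Rightarrow> real)
    \<Rightarrow> ('w \<Rightarrow> 'm::finite \<Rightarrow> real) \<Rightarrow> ('m \<Rightarrow> 'a \<Rightarrow> real) \<Rightarrow> bool" where
  "S_BR \<mu>0 uS \<sigma> \<rho> \<longleftrightarrow>
     (\<forall>\<sigma>'. messaging_strategy \<sigma>' \<longrightarrow> payoff \<mu>0 uS \<sigma>' \<rho> \<le> payoff \<mu>0 uS \<sigma> \<rho>)"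

definition R_BR :: "('w::finite \<Rightarrow> real) \<Rightarrow> ('a::finite \<Rightarrow> 'w \<Rightarrow> real)
    \<Rightarrow> ('w \<Rightarrow> 'm::finite \<Rightarrow> real) \<Rightarrow> ('m \<Rightarrow> 'a \<Rightarrow> real) \<Rightarrow> bool" where
  "R_BR \<mu>0 uR \<sigma> \<rho> \<longleftrightarrow>
     (\<forall>\<rho>'. action_strategy \<rho>' \<longrightarrow> payoff \<mu>0 uR \<sigma> \<rho>' \<le> payoff \<mu>0 uR \<sigma> \<rho>)"

definition profile :: "('w::finite \<Rightarrow> 'm::finite \<Rightarrow> real) \<Rightarrow> ('m \<Rightarrow> 'a::finite \<Rightarrow> real) \<Rightarrow> bool" where
  "profile \<sigma> \<rho> \<longleftrightarrow> messaging_strategy \<sigma> \<and> action_strategy \<rho>"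

definition partitional :: "('w::finite \<Rightarrow> 'm::finite \<Rightarrow> real) \<Rightarrow> bool" where
  "partitional \<sigma> \<longleftrightarrow> (\<forall>w. \<exists>m. \<sigma> w m = 1)"

text \<open>The message type is fixed by the itself-argument.\<close>
definition persuasion_payoff :: "'m::finite itself \<Rightarrow> ('w::finite \<Rightarrow> real)
    \<Rightarrow> ('a::finite \<Rightarrow> 'w \<Rightarrow> real) \<Rightarrow> ('a \<Rightarrow> 'w \<Rightarrow> real) \<Rightarrow> real" where
  "persuasion_payoff M \<mu>0 uS uR =
     Sup {payoff \<mu>0 uS \<sigma> \<rho> | (\<sigma> :: 'w \<Rightarrow> 'm \<Rightarrow> real) \<rho>.
            profile \<sigma> \<rho> \<and> R_BR \<mu>0 uR \<sigma> \<rho>}"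

definition partitional_persuasion_payoff :: "'m::finite itself \<Rightarrow> ('w::finite \<Rightarrow> real)
    \<Rightarrow> ('a::finite \<Rightarrow> 'w \<Rightarrow> real) \<Rightarrow> ('a \<Rightarrow> 'w \<Rightarrow> real) \<Rightarrow> real" where
  "partitional_persuasion_payoff M \<mu>0 uS uR =
     Sup {payoff \<mu>0 uS \<sigma> \<rho> | (\<sigma> :: 'w \<Rightarrow> 'm \<Rightarrow> real) \<rho>.
            profile \<sigma> \<rho> \<and> R_BR \<mu>0 uR \<sigma> \<rho> \<and> partitional \<sigma>}"

definition cheap_talk_payoff :: "'m::finite itself \<Rightarrow> ('w::finite \<Rightarrow> real)
    \<Rightarrow> ('a::finite \<Rightarrow> 'w \<Rightarrow> real) \<Rightarrow> ('a \<Rightarrow> 'w \<Rightarrow> real) \<Rightarrow> real" where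
  "cheap_talk_payoff M \<mu>0 uS uR =
     Sup {payoff \<mu>0 uS \<sigma> \<rho> | (\<sigma> :: 'w \<Rightarrow> 'm \<Rightarrow> real) \<rho>.
            profile \<sigma> \<rho> \<and> S_BR \<mu>0 uS \<sigma> \<rho> \<and> R_BR \<mu>0 uR \<sigma> \<rho>}"

definition commitment_valuable :: "'m::finite itself \<Rightarrow> ('w::finite \<Rightarrow> real)
    \<Rightarrow> ('a::finite \<Rightarrow> 'w \<Rightarrow> real) \<Rightarrow> ('a \<Rightarrow> 'w \<Rightarrow> real) \<Rightarrow> bool" where
  "commitment_valuable M \<mu>0 uS uR \<longleftrightarrow>
     persuasion_payoff M \<mu>0 uS uR > cheap_talk_payoff M \<mu>0 uS uR"

definition values_randomization :: "'m::finite itself \<Rightarrow> ('w::finite \<Rightarrow> real)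
    \<Rightarrow> ('a::finite \<Rightarrow> 'w \<Rightarrow> real) \<Rightarrow> ('a \<Rightarrow> 'w \<Rightarrow> real) \<Rightarrow> bool" where
  "values_randomization M \<mu>0 uS uR \<longleftrightarrow>
     persuasion_payoff M \<mu>0 uS uR > partitional_persuasion_payoff M \<mu>0 uS uR"

text \<open>An environment is a point of [0,1]^(2|A||Omega|), coded as a function on
  bool \<times> A \<times> Omega: True-coordinates give u_S, False-coordinates give u_R.\<close>
definition env_S :: "(bool \<times> 'a \<times> 'w \<Rightarrow> real) \<Rightarrow> 'a \<Rightarrow> 'w \<Rightarrow> real" where
  "env_S e a w = e (True, a, w)"

definition env_R :: "(bool \<times> 'a \<times> 'w \<Rightarrow> real) \<Rightarrow> 'a \<Rightarrow> 'w \<Rightarrow> real" where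
  "env_R e a w = e (False, a, w)"


end

(*
  Identify a profile with its outcome, the distribution of actions in each state. Since
  there are at least as many messages as actions, Sender can recommend actions, so the
  persuasion payoff is the value of the linear program maximising Sender's expected utility
  over the polytope of obedient outcomes.

  Call an environment generic if Sender is never indifferent between two actions in a state,
  Receiver is never indifferent between two actions given a nonempty event, and the linear
  program has a unique solution. Each condition fails only on finitely many graphs of
  measurable functions of the remaining coordinates, hence on a null set; for uniqueness
  this is because two optimal vertices solve linear systems that depend on Receiver's
  utility only, so equal Sender values pin down one of Sender's utilities.

  In a generic environment an optimal persuasion profile never mixes after a sent message,
  so an optimal partitional profile and an optimal cheap-talk equilibrium both induce a pure
  optimal outcome (for the equilibrium this uses that Sender strictly ranks actions). A pure
  optimal outcome is incentive compatible for Sender, as a small shift towards a preferred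
  action would stay obedient, so it is induced both by a cheap-talk equilibrium and by a
  partitional profile. Hence the persuasion payoff is attained by a partitional profile iff
  it is attained by a cheap-talk equilibrium.
*)

theory Submission
  imports Defs
begin

section \<open>Vertices of polyhedra and linear programs\<close>

definition feasible_region :: "('l \<Rightarrow> real^'n) \<Rightarrow> ('l \<Rightarrow> real) \<Rightarrow> (real^'n) set" where
  "feasible_region r b = {x. \<forall>l. b l \<le> r l \<bullet> x}"

definition maximizers :: "real^'n \<Rightarrow> (real^'n) set \<Rightarrow> (real^'n) set" where
  "maximizers c S = {x \<in> S. \<forall>y\<in>S. c \<bullet> y \<le> c \<bullet> x}"

definition active_rows :: "('l \<Rightarrow> real^'n) \<Rightarrow> ('l \<Rightarrow> real) \<Rightarrow> real^'n \<Rightarrow> 'l set" where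
  "active_rows r b x = {l. r l \<bullet> x = b l}"

lemma closed_feasible_region: "closed (feasible_region r b)"
proof -
  have "feasible_region r b = (\<Inter>l. {x. r l \<bullet> x \<ge> b l})"
    by (auto simp: feasible_region_def)
  then show ?thesis
    by (simp add: closed_INT closed_halfspace_ge)
qed

lemma convex_feasible_region: "convex (feasible_region r b)"
proof -
  have "feasible_region r b = (\<Inter>l. {x. r l \<bullet> x \<ge> b l})"
    by (auto simp: feasible_region_def)
  then show ?thesis
    by (simp add: convex_INT convex_halfspace_ge)
qed

lemma compact_maximizers:
  assumes "compact S"
  shows "compact (maximizers c S)"
proof -
  have "maximizers c S = S \<inter> (\<Inter>y\<in>S. {x. c \<bullet> x \<ge> c \<bullet> y})"
    by (auto simp: maximizers_def)
  then show ?thesis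
    using assms by (simp add: closed_INT closed_halfspace_ge compact_Int_closed)
qed

lemma maximizers_face_of:
  assumes "convex S"
  shows "maximizers c S face_of S"
proof (cases "maximizers c S = {}")
  case False
  then obtain x0 where x0: "x0 \<in> maximizers c S" by blast
  then have "maximizers c S = S \<inter> {x. c \<bullet> x = c \<bullet> x0}"
    by (auto simp: maximizers_def intro: order.antisym)
  moreover have "\<And>x. x \<in> S \<Longrightarrow> c \<bullet> x \<le> c \<bullet> x0"
    using x0 by (simp add: maximizers_def)
  ultimately show ?thesis
    using assms by (simp add: face_of_Int_supporting_hyperplane_le)
qed simp

lemma eventually_feasible_direction:
  fixes r :: "'l::finite \<Rightarrow> real^'n"
  assumes x: "x \<in> feasible_region r b"
    and d: "\<And>l. l \<in> active_rows r b x \<Longrightarrow> 0 \<le> r l \<bullet> d"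
  shows "\<forall>\<^sub>F t in at_right 0. x + t *\<^sub>R d \<in> feasible_region r b"
proof -
  have "\<forall>\<^sub>F t in at_right 0. b l \<le> r l \<bullet> (x + t *\<^sub>R d)" for l
  proof (cases "l \<in> active_rows r b x")
    case True
    show ?thesis
      using eventually_at_right_less[of 0]
      by eventually_elim (use True d[OF True] in \<open>simp add: inner_add_right active_rows_def\<close>)
  next
    case False
    then have "b l < r l \<bullet> x"
      using x by (simp add: feasible_region_def active_rows_def order.strict_iff_order)
    moreover have "((\<lambda>t. r l \<bullet> (x + t *\<^sub>R d)) \<longlongrightarrow> r l \<bullet> x) (at_right 0)"
      by (intro tendsto_eq_intros) auto
    ultimately have "\<forall>\<^sub>F t in at_right 0. b l < r l \<bullet> (x + t *\<^sub>R d)"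
      by (rule order_tendstoD(1)[rotated])
    then show ?thesis
      by (rule eventually_mono) simp
  qed
  then show ?thesis
    unfolding feasible_region_def by (simp add: eventually_all_finite)
qed

lemma obtain_feasible_step:
  fixes r :: "'l::finite \<Rightarrow> real^'n"
  assumes "x \<in> feasible_region r b" "\<And>l. l \<in> active_rows r b x \<Longrightarrow> 0 \<le> r l \<bullet> d"
  obtains t where "t > 0" "x + t *\<^sub>R d \<in> feasible_region r b"
  using eventually_happens'[OF trivial_limit_at_right_real
      eventually_conj[OF eventually_at_right_less eventually_feasible_direction[OF assms]]]
  by blast

lemma maximizer_feasible_direction:
  fixes r :: "'l::finite \<Rightarrow> real^'n"
  assumes x: "x \<in> maximizers c (feasible_region r b)"
    and d: "\<And>l. l \<in> active_rows r b x \<Longrightarrow> 0 \<le> r l \<bullet> d"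
  shows "c \<bullet> d \<le> 0"
proof -
  have "x \<in> feasible_region r b"
    using x by (simp add: maximizers_def)
  then obtain t where "t > 0" "x + t *\<^sub>R d \<in> feasible_region r b"
    using d by (rule obtain_feasible_step)
  then have "c \<bullet> (x + t *\<^sub>R d) \<le> c \<bullet> x"
    using x by (simp add: maximizers_def)
  with \<open>t > 0\<close> show ?thesis
    by (simp add: inner_add_right mult_le_0_iff)
qed

lemma extreme_point_active_rows_nullspace:
  fixes r :: "'l::finite \<Rightarrow> real^'n"
  assumes ext: "x extreme_point_of feasible_region r b"
    and tangent: "\<And>l. l \<in> active_rows r b x \<Longrightarrow> r l \<bullet> d = 0"
  shows "d = 0"
proof (rule ccontr)
  assume "d \<noteq> 0"
  have x: "x \<in> feasible_region r b"
    using ext by (simp add: extreme_point_of_def)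
  obtain s where "s > 0" and s: "x + s *\<^sub>R d \<in> feasible_region r b"
    using obtain_feasible_step[OF x, of d] tangent by force
  obtain t where "t > 0" and t: "x + t *\<^sub>R (- d) \<in> feasible_region r b"
    using obtain_feasible_step[OF x, of "- d"] tangent by force
  define u where "u = s / (s + t)"
  have u: "0 < u" "u < 1" "(1 - u) * s - u * t = 0"
    using \<open>s > 0\<close> \<open>t > 0\<close> by (auto simp: u_def field_simps)
  have "(1 - u) *\<^sub>R (x + s *\<^sub>R d) + u *\<^sub>R (x + t *\<^sub>R (- d)) = x + ((1 - u) * s - u * t) *\<^sub>R d"
    by (simp add: algebra_simps)
  with u have "x = (1 - u) *\<^sub>R (x + s *\<^sub>R d) + u *\<^sub>R (x + t *\<^sub>R (- d))"
    by simp
  moreover have "x + s *\<^sub>R d \<noteq> x + t *\<^sub>R (- d)"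
  proof
    assume "x + s *\<^sub>R d = x + t *\<^sub>R (- d)"
    then have "(s + t) *\<^sub>R d = 0"
      by (simp add: scaleR_left_distrib)
    with \<open>d \<noteq> 0\<close> \<open>s > 0\<close> \<open>t > 0\<close> show False
      by simp
  qed
  ultimately have "x \<in> open_segment (x + s *\<^sub>R d) (x + t *\<^sub>R (- d))"
    using u unfolding in_segment by blast
  then show False
    using ext s t by (auto simp: extreme_point_of_def)
qed

definition gram_matrix :: "('l \<Rightarrow> real^'n) \<Rightarrow> 'l set \<Rightarrow> real^'n^'n" where
  "gram_matrix r A = (\<chi> i j. \<Sum>l\<in>A. r l $ i * r l $ j)"

definition gram_rhs :: "('l \<Rightarrow> real^'n) \<Rightarrow> ('l \<Rightarrow> real) \<Rightarrow> 'l set \<Rightarrow> real^'n" where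
  "gram_rhs r b A = (\<chi> i. \<Sum>l\<in>A. b l * r l $ i)"

text \<open>Cramer's rule for the normal equations \<open>gram_matrix r A *v x = gram_rhs r b A\<close> of the
  system \<open>r l \<bullet> x = b l\<close>, \<open>l \<in> A\<close>.\<close>
definition gram_solution :: "('l \<Rightarrow> real^'n) \<Rightarrow> ('l \<Rightarrow> real) \<Rightarrow> 'l set \<Rightarrow> real^'n" where
  "gram_solution r b A =
     (\<chi> k. det (\<chi> i j. if j = k then gram_rhs r b A $ i else gram_matrix r A $ i $ j)
           / det (gram_matrix r A))"

lemma gram_matrix_mult: "gram_matrix r A *v x = (\<Sum>l\<in>A. (r l \<bullet> x) *\<^sub>R r l)"
  unfolding gram_matrix_def matrix_vector_mult_def inner_vec_def
  by (simp add: vec_eq_iff sum_component sum_distrib_left sum_distrib_right mult_ac)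
     (auto intro: sum.swap)

lemma det_gram_matrix_neq_0:
  fixes r :: "'l::finite \<Rightarrow> real^'n"
  assumes "\<And>x. (\<And>l. l \<in> A \<Longrightarrow> r l \<bullet> x = 0) \<Longrightarrow> x = 0"
  shows "det (gram_matrix r A) \<noteq> 0"
proof -
  have "x = 0" if "gram_matrix r A *v x = 0" for x
  proof -
    have "(\<Sum>l\<in>A. (r l \<bullet> x)\<^sup>2) = x \<bullet> (gram_matrix r A *v x)"
      by (simp add: gram_matrix_mult inner_sum_right power2_eq_square inner_commute)
    then have "(\<Sum>l\<in>A. (r l \<bullet> x)\<^sup>2) = 0"
      using that by simp
    then show ?thesis
      by (intro assms) (simp add: sum_nonneg_eq_0_iff)
  qed
  then have "inj ((*v) (gram_matrix r A))"
    by (intro linear_inj_on_iff_eq_0[THEN iffD2]) auto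
  then show ?thesis
    using det_nz_iff_inj[OF matrix_vector_mul_linear] by (metis matrix_of_matrix_vector_mul)
qed

lemma extreme_point_eq_gram_solution:
  fixes r :: "'l::finite \<Rightarrow> real^'n"
  assumes "x extreme_point_of feasible_region r b"
  shows "x = gram_solution r b (active_rows r b x)"
proof -
  let ?A = "active_rows r b x"
  have "det (gram_matrix r ?A) \<noteq> 0"
    using extreme_point_active_rows_nullspace[OF assms] by (intro det_gram_matrix_neq_0) blast
  moreover have "gram_matrix r ?A *v x = gram_rhs r b ?A"
    by (simp add: gram_matrix_mult gram_rhs_def active_rows_def vec_eq_iff sum_component)
  ultimately show ?thesis
    unfolding gram_solution_def by (simp add: cramer)
qed

text \<open>The two solutions found depend on \<open>r\<close> and \<open>b\<close> only, not on the objective \<open>c\<close>.\<close>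
lemma distinct_maximizers_imp_gram_solutions:
  fixes r :: "'l::finite \<Rightarrow> real^'n"
  assumes "compact (feasible_region r b)"
    and "x \<in> maximizers c (feasible_region r b)" "y \<in> maximizers c (feasible_region r b)" "x \<noteq> y"
  shows "\<exists>A B. gram_solution r b A \<noteq> gram_solution r b B
                \<and> c \<bullet> gram_solution r b A = c \<bullet> gram_solution r b B"
proof -
  let ?P = "feasible_region r b"
  let ?M = "maximizers c ?P"
  have face: "?M face_of ?P"
    by (rule maximizers_face_of[OF convex_feasible_region])
  have "?M = convex hull {v. v extreme_point_of ?M}"
    using assms(1) face by (intro Krein_Milman_Minkowski compact_maximizers face_of_imp_convex)
  moreover have "\<not> (\<exists>v. {v. v extreme_point_of ?M} \<subseteq> {v})"
    by (metis assms(2-4) calculation convex_hull_singleton hull_mono singletonD subsetD)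
  ultimately obtain v w where vw: "v extreme_point_of ?M" "w extreme_point_of ?M" "v \<noteq> w"
    by blast
  then have "v \<in> ?M" "w \<in> ?M"
    by (auto simp: extreme_point_of_def)
  then have "c \<bullet> v = c \<bullet> w"
    by (auto simp: maximizers_def intro: order.antisym)
  moreover have "v extreme_point_of ?P" "w extreme_point_of ?P"
    using vw face extreme_point_of_face by blast+
  ultimately show ?thesis
    using vw(3) by (metis extreme_point_eq_gram_solution)
qed

section \<open>Strategies as stochastic matrices\<close>

lemma messaging_strategy_eq_action_strategy: "messaging_strategy = action_strategy"
  by (simp add: fun_eq_iff messaging_strategy_def action_strategy_def)

lemma action_strategy_le_one:
  assumes "action_strategy \<rho>"
  shows "\<rho> m a \<le> 1"
proof -
  have "\<rho> m a \<le> (\<Sum>a'\<in>UNIV. \<rho> m a')"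
    using assms by (intro member_le_sum) (auto simp: action_strategy_def)
  then show ?thesis
    using assms by (simp add: action_strategy_def)
qed

lemma action_strategy_ex_pos:
  assumes "action_strategy \<rho>"
  shows "\<exists>a. 0 < \<rho> m a"
proof (rule ccontr)
  assume "\<nexists>a. 0 < \<rho> m a"
  then have "\<rho> m a = 0" for a
    using assms by (force simp: action_strategy_def order.strict_iff_order)
  then have "(\<Sum>a\<in>UNIV. \<rho> m a) = 0"
    by simp
  then show False
    using assms by (simp add: action_strategy_def)
qed

lemma action_strategy_point_mass:
  assumes "action_strategy \<rho>" and only: "\<And>z. 0 < \<rho> m z \<Longrightarrow> z = a"
  shows "\<rho> m z = (if z = a then 1 else 0)"
proof -
  have zero: "\<rho> m z = 0" if "z \<noteq> a" for z
    using assms(1) only[of z] that by (force simp: action_strategy_def order.strict_iff_order)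
  then have "(\<Sum>z\<in>UNIV. \<rho> m z) = \<rho> m a"
    by (subst sum.remove[of _ a]) auto
  then show ?thesis
    using assms(1) zero by (simp add: action_strategy_def)
qed

lemma action_strategy_eq_one_imp_point_mass:
  assumes \<rho>: "action_strategy \<rho>" and one: "\<rho> m a = 1"
  shows "\<rho> m z = (if z = a then 1 else 0)"
proof (rule action_strategy_point_mass[OF \<rho>])
  fix z
  assume "0 < \<rho> m z"
  show "z = a"
  proof (rule ccontr)
    assume "z \<noteq> a"
    then have "\<rho> m a + \<rho> m z = (\<Sum>z\<in>{a, z}. \<rho> m z)"
      by simp
    also have "\<dots> \<le> (\<Sum>z\<in>UNIV. \<rho> m z)"
      using \<rho> by (intro sum_mono2) (auto simp: action_strategy_def)
    finally have "\<rho> m a + \<rho> m z \<le> (\<Sum>z\<in>UNIV. \<rho> m z)" .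
    with \<open>0 < \<rho> m z\<close> one \<rho> show False
      by (simp add: action_strategy_def)
  qed
qed

definition pure_strategy :: "('x \<Rightarrow> 'y) \<Rightarrow> 'x \<Rightarrow> 'y \<Rightarrow> real" where
  "pure_strategy f x y = of_bool (y = f x)"

lemma action_strategy_pure_strategy: "action_strategy (pure_strategy f)"
  by (simp add: action_strategy_def pure_strategy_def)

lemma partitional_pure_strategy: "partitional (pure_strategy f)"
  by (auto simp: partitional_def pure_strategy_def)

definition move_mass :: "('x \<Rightarrow> 'y \<Rightarrow> real) \<Rightarrow> 'x \<Rightarrow> 'y \<Rightarrow> 'y \<Rightarrow> 'x \<Rightarrow> 'y \<Rightarrow> real" where
  "move_mass \<rho> m a a' m' z = \<rho> m' z + of_bool (m' = m) * \<rho> m a * (of_bool (z = a') - of_bool (z = a))"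

lemma sum_of_bool_diff_mult:
  fixes h :: "'y::finite \<Rightarrow> real"
  shows "(\<Sum>z\<in>UNIV. (of_bool (z = a') - of_bool (z = a)) * h z) = h a' - h a"
  by (simp add: left_diff_distrib sum_subtractf)

lemma action_strategy_move_mass:
  assumes "action_strategy \<rho>"
  shows "action_strategy (move_mass \<rho> m a a')"
  unfolding action_strategy_def
proof (intro conjI allI)
  fix m' z
  show "0 \<le> move_mass \<rho> m a a' m' z"
    using assms by (auto simp: action_strategy_def move_mass_def)
next
  fix m'
  have "(\<Sum>z\<in>UNIV. move_mass \<rho> m a a' m' z)
      = (\<Sum>z\<in>UNIV. \<rho> m' z) + of_bool (m' = m) * \<rho> m a * (\<Sum>z\<in>UNIV. (of_bool (z = a') - of_bool (z = a)) * 1)"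
    by (simp add: move_mass_def sum.distrib sum_distrib_left mult.assoc)
  then show "(\<Sum>z\<in>UNIV. move_mass \<rho> m a a' m' z) = 1"
    using assms by (simp only: sum_of_bool_diff_mult) (simp add: action_strategy_def)
qed

lemma sum_move_mass:
  fixes \<rho> :: "'x::finite \<Rightarrow> 'y::finite \<Rightarrow> real"
  shows "(\<Sum>m'\<in>UNIV. \<Sum>z\<in>UNIV. move_mass \<rho> m a a' m' z * g m' z)
       = (\<Sum>m'\<in>UNIV. \<Sum>z\<in>UNIV. \<rho> m' z * g m' z) + \<rho> m a * (g m a' - g m a)"
proof -
  have pointwise: "move_mass \<rho> m a a' m' z * g m' z = \<rho> m' z * g m' z
      + of_bool (m' = m) * (\<rho> m a * ((of_bool (z = a') - of_bool (z = a)) * g m' z))" for m' z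
    by (simp add: move_mass_def algebra_simps)
  have "(\<Sum>m'\<in>UNIV. \<Sum>z\<in>UNIV. move_mass \<rho> m a a' m' z * g m' z)
      = (\<Sum>m'\<in>UNIV. \<Sum>z\<in>UNIV. \<rho> m' z * g m' z)
        + (\<Sum>m'\<in>UNIV. of_bool (m' = m) * (\<rho> m a * (\<Sum>z\<in>UNIV. (of_bool (z = a') - of_bool (z = a)) * g m' z)))"
    by (simp only: pointwise sum.distrib sum_distrib_left)
  also have "\<dots> = (\<Sum>m'\<in>UNIV. \<Sum>z\<in>UNIV. \<rho> m' z * g m' z) + \<rho> m a * (g m a' - g m a)"
    by (simp only: sum_of_bool_diff_mult) simp
  finally show ?thesis .
qed

lemma ex_greatest_value:
  fixes f :: "'a::finite \<Rightarrow> 'b::linorder"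
  obtains b where "\<And>a. f a \<le> f b"
proof -
  have "Max (range f) \<in> range f"
    by (rule Max_in) auto
  then obtain b where "f b = Max (range f)"
    by (metis rangeE)
  then have "f a \<le> f b" for a
    by simp
  then show ?thesis
    by (rule that)
qed

lemma action_strategy_sum_le_if_support_maximal:
  assumes \<rho>: "action_strategy \<rho>" and \<rho>': "action_strategy \<rho>'"
    and opt: "\<And>m a a'. 0 < \<rho> m a \<Longrightarrow> g m a' \<le> g m a"
  shows "(\<Sum>m\<in>UNIV. \<Sum>a\<in>UNIV. \<rho>' m a * g m a) \<le> (\<Sum>m\<in>UNIV. \<Sum>a\<in>UNIV. \<rho> m a * g m a)"
proof -
  have "\<exists>c. \<forall>a. g m a \<le> g m c" for m
    using ex_greatest_value[of "g m"] by metis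
  then obtain b where b: "\<And>m a. g m a \<le> g m (b m)"
    by metis
  have on_support: "\<rho> m a * g m a = \<rho> m a * g m (b m)" for m a
    using opt[of m a "b m"] b[of m a] \<rho>
    by (cases "0 < \<rho> m a") (auto simp: action_strategy_def order.strict_iff_order)
  have "(\<Sum>m\<in>UNIV. \<Sum>a\<in>UNIV. \<rho>' m a * g m a) \<le> (\<Sum>m\<in>UNIV. \<Sum>a\<in>UNIV. \<rho>' m a * g m (b m))"
    using \<rho>' by (intro sum_mono mult_left_mono b) (auto simp: action_strategy_def)
  also have "\<dots> = (\<Sum>m\<in>UNIV. g m (b m))"
    using \<rho>' by (simp add: action_strategy_def sum_distrib_right[symmetric])
  also have "\<dots> = (\<Sum>m\<in>UNIV. \<Sum>a\<in>UNIV. \<rho> m a * g m (b m))"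
    using \<rho> by (simp add: action_strategy_def sum_distrib_right[symmetric])
  also have "\<dots> = (\<Sum>m\<in>UNIV. \<Sum>a\<in>UNIV. \<rho> m a * g m a)"
    by (simp add: on_support)
  finally show ?thesis .
qed

lemma action_strategy_maximizes_iff:
  assumes \<rho>: "action_strategy \<rho>"
  shows "(\<forall>\<rho>'. action_strategy \<rho>' \<longrightarrow>
            (\<Sum>m\<in>UNIV. \<Sum>a\<in>UNIV. \<rho>' m a * g m a) \<le> (\<Sum>m\<in>UNIV. \<Sum>a\<in>UNIV. \<rho> m a * g m a))
         \<longleftrightarrow> (\<forall>m a a'. 0 < \<rho> m a \<longrightarrow> g m a' \<le> g m a)"
proof (intro iffI allI impI)
  fix m a a'
  assume max: "\<forall>\<rho>'. action_strategy \<rho>' \<longrightarrow>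
            (\<Sum>m\<in>UNIV. \<Sum>a\<in>UNIV. \<rho>' m a * g m a) \<le> (\<Sum>m\<in>UNIV. \<Sum>a\<in>UNIV. \<rho> m a * g m a)"
    and "0 < \<rho> m a"
  have "\<rho> m a * (g m a' - g m a) \<le> 0"
    using max[rule_format, OF action_strategy_move_mass[OF \<rho>, of m a a']]
    unfolding sum_move_mass by simp
  with \<open>0 < \<rho> m a\<close> show "g m a' \<le> g m a"
    by (simp add: mult_le_0_iff)
qed (use action_strategy_sum_le_if_support_maximal[OF \<rho>] in blast)

section \<open>Best responses and obedient outcomes\<close>

text \<open>Receiver's expected utility of \<open>a\<close> after message \<open>m\<close>, not normalised by the probability
  of \<open>m\<close>.\<close>
definition posterior_value :: "('w::finite \<Rightarrow> real) \<Rightarrow> ('a \<Rightarrow> 'w \<Rightarrow> real) \<Rightarrow> ('w \<Rightarrow> 'm \<Rightarrow> real)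
    \<Rightarrow> 'm \<Rightarrow> 'a \<Rightarrow> real" where
  "posterior_value \<mu> u \<sigma> m a = (\<Sum>w\<in>UNIV. \<mu> w * \<sigma> w m * u a w)"

definition message_value :: "('a::finite \<Rightarrow> 'w \<Rightarrow> real) \<Rightarrow> ('m \<Rightarrow> 'a \<Rightarrow> real) \<Rightarrow> 'w \<Rightarrow> 'm \<Rightarrow> real" where
  "message_value u \<rho> w m = (\<Sum>a\<in>UNIV. \<rho> m a * u a w)"

lemma payoff_eq_sum_posterior_value:
  "payoff \<mu> u \<sigma> \<rho> = (\<Sum>m\<in>UNIV. \<Sum>a\<in>UNIV. \<rho> m a * posterior_value \<mu> u \<sigma> m a)"
proof -
  have "payoff \<mu> u \<sigma> \<rho> = (\<Sum>m\<in>UNIV. \<Sum>w\<in>UNIV. \<Sum>a\<in>UNIV. \<mu> w * \<sigma> w m * \<rho> m a * u a w)"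
    unfolding payoff_def by (rule sum.swap)
  also have "\<dots> = (\<Sum>m\<in>UNIV. \<Sum>a\<in>UNIV. \<Sum>w\<in>UNIV. \<mu> w * \<sigma> w m * \<rho> m a * u a w)"
    by (intro sum.cong refl sum.swap)
  finally show ?thesis
    by (simp add: posterior_value_def sum_distrib_left mult_ac)
qed

lemma payoff_eq_sum_message_value:
  "payoff \<mu> u \<sigma> \<rho> = (\<Sum>w\<in>UNIV. \<Sum>m\<in>UNIV. \<sigma> w m * (\<mu> w * message_value u \<rho> w m))"
  by (simp add: payoff_def message_value_def sum_distrib_left mult_ac)

lemma R_BR_iff:
  assumes "action_strategy \<rho>"
  shows "R_BR \<mu> u \<sigma> \<rho> \<longleftrightarrow>
    (\<forall>m a a'. 0 < \<rho> m a \<longrightarrow> posterior_value \<mu> u \<sigma> m a' \<le> posterior_value \<mu> u \<sigma> m a)"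
  unfolding R_BR_def payoff_eq_sum_posterior_value by (rule action_strategy_maximizes_iff[OF assms])

lemma S_BR_iff:
  assumes "messaging_strategy \<sigma>" and \<mu>: "\<And>w. 0 < \<mu> w"
  shows "S_BR \<mu> u \<sigma> \<rho> \<longleftrightarrow>
    (\<forall>w m m'. 0 < \<sigma> w m \<longrightarrow> message_value u \<rho> w m' \<le> message_value u \<rho> w m)"
proof -
  have "S_BR \<mu> u \<sigma> \<rho> \<longleftrightarrow>
    (\<forall>w m m'. 0 < \<sigma> w m \<longrightarrow> \<mu> w * message_value u \<rho> w m' \<le> \<mu> w * message_value u \<rho> w m)"
    using assms(1) unfolding S_BR_def payoff_eq_sum_message_value messaging_strategy_eq_action_strategy
    by (rule action_strategy_maximizes_iff)
  with \<mu> show ?thesis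
    by simp
qed

lemma message_value_pure_strategy: "message_value u (pure_strategy f) w m = u (f m) w"
  by (simp add: message_value_def pure_strategy_def)

definition outcome :: "('w::finite \<Rightarrow> 'm::finite \<Rightarrow> real) \<Rightarrow> ('m \<Rightarrow> 'a::finite \<Rightarrow> real) \<Rightarrow> real^('a \<times> 'w)" where
  "outcome \<sigma> \<rho> = (\<chi> k. \<Sum>m\<in>UNIV. \<sigma> (snd k) m * \<rho> m (fst k))"

lemma outcome_nth [simp]: "outcome \<sigma> \<rho> $ (a, w) = (\<Sum>m\<in>UNIV. \<sigma> w m * \<rho> m a)"
  by (simp add: outcome_def)

definition utility_weights :: "('w::finite \<Rightarrow> real) \<Rightarrow> ('a::finite \<Rightarrow> 'w \<Rightarrow> real) \<Rightarrow> real^('a \<times> 'w)" where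
  "utility_weights \<mu> u = (\<chi> k. \<mu> (snd k) * u (fst k) (snd k))"

lemma sum_UNIV_prod: "(\<Sum>k\<in>UNIV. f k) = (\<Sum>a\<in>UNIV. \<Sum>w\<in>UNIV. f (a, w))"
  for f :: "'a::finite \<times> 'w::finite \<Rightarrow> 'r::comm_monoid_add"
  by (simp add: sum.cartesian_product flip: UNIV_Times_UNIV)

lemma inner_utility_weights:
  "utility_weights \<mu> u \<bullet> p = (\<Sum>a\<in>UNIV. \<Sum>w\<in>UNIV. \<mu> w * u a w * p $ (a, w))"
  by (simp add: utility_weights_def inner_vec_def sum_UNIV_prod)

lemma payoff_eq_inner_outcome: "payoff \<mu> u \<sigma> \<rho> = utility_weights \<mu> u \<bullet> outcome \<sigma> \<rho>"
proof -
  have "payoff \<mu> u \<sigma> \<rho> = (\<Sum>w\<in>UNIV. \<Sum>a\<in>UNIV. \<Sum>m\<in>UNIV. \<mu> w * \<sigma> w m * \<rho> m a * u a w)"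
    unfolding payoff_def by (intro sum.cong refl sum.swap)
  also have "\<dots> = (\<Sum>a\<in>UNIV. \<Sum>w\<in>UNIV. \<Sum>m\<in>UNIV. \<mu> w * \<sigma> w m * \<rho> m a * u a w)"
    by (rule sum.swap)
  finally show ?thesis
    by (simp add: inner_utility_weights sum_distrib_left mult_ac)
qed

text \<open>Labels of the linear constraints on outcomes: \<open>Inl (s, w)\<close> bounds the total probability
  of the actions in state \<open>w\<close> from below (\<open>s\<close>) or above (\<open>\<not> s\<close>), \<open>Inr (Inl j)\<close> says that
  entry \<open>j\<close> is nonnegative, and \<open>Inr (Inr (x, y))\<close> says that Receiver, told to play \<open>x\<close>,
  does not gain by playing \<open>y\<close>.\<close>
type_synonym ('a, 'w) outcome_constraint = "(bool \<times> 'w) + ('a \<times> 'w) + ('a \<times> 'a)"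

definition outcome_row :: "('w::finite \<Rightarrow> real) \<Rightarrow> ('a::finite \<Rightarrow> 'w \<Rightarrow> real)
    \<Rightarrow> ('a, 'w) outcome_constraint \<Rightarrow> real^('a \<times> 'w)" where
  "outcome_row \<mu> uR l = (case l of
       Inl (s, w) \<Rightarrow> (\<chi> k. of_bool (snd k = w) * (if s then 1 else -1))
     | Inr (Inl j) \<Rightarrow> (\<chi> k. of_bool (k = j))
     | Inr (Inr (x, y)) \<Rightarrow> (\<chi> k. of_bool (fst k = x) * (\<mu> (snd k) * (uR x (snd k) - uR y (snd k)))))"

definition outcome_bound :: "('a, 'w) outcome_constraint \<Rightarrow> real" where
  "outcome_bound l = (case l of Inl (s, w) \<Rightarrow> (if s then 1 else -1) | Inr _ \<Rightarrow> 0)"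

definition obedient_outcomes :: "('w::finite \<Rightarrow> real) \<Rightarrow> ('a::finite \<Rightarrow> 'w \<Rightarrow> real) \<Rightarrow> (real^('a \<times> 'w)) set" where
  "obedient_outcomes \<mu> uR = feasible_region (outcome_row \<mu> uR) outcome_bound"

lemma sum_of_bool_fst:
  "(\<Sum>k\<in>UNIV. of_bool (fst k = a) * f k) = (\<Sum>w\<in>UNIV. f (a, w))"
  for f :: "'a::finite \<times> 'w::finite \<Rightarrow> real"
  by (simp only: sum_UNIV_prod fst_conv sum_distrib_left[symmetric]) simp

lemma sum_of_bool_snd:
  "(\<Sum>k\<in>UNIV. of_bool (snd k = w) * f k) = (\<Sum>a\<in>UNIV. f (a, w))"
  for f :: "'a::finite \<times> 'w::finite \<Rightarrow> real"
  by (simp only: sum_UNIV_prod snd_conv) simp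

lemma inner_outcome_row_total:
  "outcome_row \<mu> uR (Inl (s, w)) \<bullet> p = (if s then 1 else -1) * (\<Sum>a\<in>UNIV. p $ (a, w))"
  by (simp only: outcome_row_def inner_vec_def inner_real_def sum.case prod.case vec_lambda_beta mult.assoc
      sum_of_bool_snd) (simp add: sum_distrib_left)

lemma inner_outcome_row_nonneg: "outcome_row \<mu> uR (Inr (Inl j)) \<bullet> p = p $ j"
  by (simp add: outcome_row_def inner_vec_def)

lemma inner_outcome_row_obey:
  "outcome_row \<mu> uR (Inr (Inr (x, y))) \<bullet> p = (\<Sum>w\<in>UNIV. \<mu> w * (uR x w - uR y w) * p $ (x, w))"
  by (simp only: outcome_row_def inner_vec_def inner_real_def sum.case prod.case vec_lambda_beta mult.assoc
      sum_of_bool_fst) (simp add: mult_ac)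

lemmas inner_outcome_row = inner_outcome_row_total inner_outcome_row_nonneg inner_outcome_row_obey

lemma outcome_constraint_cases:
  obtains (total) s w where "l = Inl (s, w)" | (nonneg) j where "l = Inr (Inl j)"
    | (obey) x y where "l = Inr (Inr (x, y))"
  by (metis obj_sumE surj_pair)

lemma all_outcome_constraint:
  "(\<forall>l :: ('a, 'w) outcome_constraint. P l)
     \<longleftrightarrow> (\<forall>s w. P (Inl (s, w))) \<and> (\<forall>j. P (Inr (Inl j))) \<and> (\<forall>x y. P (Inr (Inr (x, y))))"
  by (metis outcome_constraint_cases)

lemma mem_obedient_outcomes_iff:
  "p \<in> obedient_outcomes \<mu> uR \<longleftrightarrow>
     (\<forall>a w. 0 \<le> p $ (a, w)) \<and> (\<forall>w. (\<Sum>a\<in>UNIV. p $ (a, w)) = 1) \<and>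
     (\<forall>x y. 0 \<le> (\<Sum>w\<in>UNIV. \<mu> w * (uR x w - uR y w) * p $ (x, w)))"
  unfolding obedient_outcomes_def feasible_region_def mem_Collect_eq all_outcome_constraint
  by (auto simp: inner_outcome_row outcome_bound_def intro: order.antisym)

lemma obedient_outcomes_nonneg: "p \<in> obedient_outcomes \<mu> uR \<Longrightarrow> 0 \<le> p $ k"
  by (cases k) (simp add: mem_obedient_outcomes_iff)

lemma obedient_outcomes_le_one:
  assumes "p \<in> obedient_outcomes \<mu> uR"
  shows "p $ (a, w) \<le> 1"
proof -
  have "p $ (a, w) \<le> (\<Sum>a'\<in>UNIV. p $ (a', w))"
    using assms by (intro member_le_sum) (auto simp: mem_obedient_outcomes_iff)
  with assms show ?thesis
    by (simp add: mem_obedient_outcomes_iff)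
qed

lemma compact_obedient_outcomes: "compact (obedient_outcomes \<mu> uR)"
proof -
  have "obedient_outcomes \<mu> uR \<subseteq> cbox 0 1"
    by (auto simp: mem_box_cart obedient_outcomes_nonneg obedient_outcomes_le_one)
  then show ?thesis
    unfolding compact_eq_bounded_closed obedient_outcomes_def
    by (metis bounded_cbox bounded_subset closed_feasible_region)
qed

lemma outcome_in_obedient_outcomes:
  assumes "profile \<sigma> \<rho>" and "R_BR \<mu> uR \<sigma> \<rho>"
  shows "outcome \<sigma> \<rho> \<in> obedient_outcomes \<mu> uR"
  unfolding mem_obedient_outcomes_iff
proof (intro conjI allI)
  have \<sigma>: "action_strategy \<sigma>" and \<rho>: "action_strategy \<rho>"
    using assms(1) by (simp_all add: profile_def messaging_strategy_eq_action_strategy)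
  fix a w
  show "0 \<le> outcome \<sigma> \<rho> $ (a, w)"
    using \<sigma> \<rho> by (auto simp: action_strategy_def intro!: sum_nonneg)
next
  have \<sigma>: "action_strategy \<sigma>" and \<rho>: "action_strategy \<rho>"
    using assms(1) by (simp_all add: profile_def messaging_strategy_eq_action_strategy)
  fix w
  have "(\<Sum>a\<in>UNIV. outcome \<sigma> \<rho> $ (a, w)) = (\<Sum>m\<in>UNIV. \<sigma> w m * (\<Sum>a\<in>UNIV. \<rho> m a))"
    by (simp add: sum_distrib_left) (rule sum.swap)
  then show "(\<Sum>a\<in>UNIV. outcome \<sigma> \<rho> $ (a, w)) = 1"
    using \<sigma> \<rho> by (simp add: action_strategy_def)
next
  have \<rho>: "action_strategy \<rho>"
    using assms(1) by (simp add: profile_def)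
  fix x y
  have "(\<Sum>w\<in>UNIV. \<mu> w * (uR x w - uR y w) * outcome \<sigma> \<rho> $ (x, w))
      = (\<Sum>m\<in>UNIV. \<rho> m x * (posterior_value \<mu> uR \<sigma> m x - posterior_value \<mu> uR \<sigma> m y))"
    by (simp add: posterior_value_def sum_distrib_left right_diff_distrib sum_subtractf mult_ac)
      (intro arg_cong2[where f = "(-)"] sum.swap)
  also have "\<dots> \<ge> 0"
    using assms(2) \<rho> unfolding R_BR_iff[OF \<rho>]
    by (intro sum_nonneg) (metis action_strategy_def diff_ge_0_iff_ge mult_nonneg_nonneg
        order.strict_iff_order mult_zero_left)
  finally show "0 \<le> (\<Sum>w\<in>UNIV. \<mu> w * (uR x w - uR y w) * outcome \<sigma> \<rho> $ (x, w))" .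
qed

section \<open>Implementing outcomes by recommendations\<close>

text \<open>Sender realises an outcome \<open>p\<close> by recommending action \<open>a\<close> through the message \<open>e a\<close>.\<close>
definition recommendation :: "('a::finite \<Rightarrow> 'm) \<Rightarrow> real^('a \<times> 'w::finite) \<Rightarrow> 'w \<Rightarrow> 'm \<Rightarrow> real" where
  "recommendation e p w m = (\<Sum>a\<in>UNIV. of_bool (e a = m) * p $ (a, w))"

lemma recommendation_apply:
  assumes "inj e"
  shows "recommendation e p w (e a) = p $ (a, w)"
  using assms by (simp add: recommendation_def inj_eq)

lemma recommendation_outside_range: "m \<notin> range e \<Longrightarrow> recommendation e p w m = 0"
  by (auto simp: recommendation_def intro!: sum.neutral)

lemma messaging_strategy_recommendation:
  assumes "p \<in> obedient_outcomes \<mu> uR"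
  shows "messaging_strategy (recommendation e p)"
  unfolding messaging_strategy_def
proof (intro conjI allI)
  fix w m
  show "0 \<le> recommendation e p w m"
    using assms by (auto simp: recommendation_def obedient_outcomes_nonneg intro!: sum_nonneg)
next
  fix w
  have "(\<Sum>m\<in>UNIV. recommendation e p w m) = (\<Sum>a\<in>UNIV. \<Sum>m\<in>UNIV. of_bool (e a = m) * p $ (a, w))"
    unfolding recommendation_def by (rule sum.swap)
  also have "\<dots> = 1"
    using assms by (simp add: mem_obedient_outcomes_iff)
  finally show "(\<Sum>m\<in>UNIV. recommendation e p w m) = 1" .
qed

lemma sum_of_bool_eq_mult:
  fixes f :: "'m::finite \<Rightarrow> real"
  shows "(\<Sum>m\<in>UNIV. of_bool (c = m) * f m) = f c"
proof -
  have "(\<Sum>m\<in>UNIV. of_bool (c = m) * f m) = (\<Sum>m\<in>UNIV. if c = m then f m else 0)"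
    by (intro sum.cong) auto
  then show ?thesis
    by simp
qed

lemma outcome_recommendation:
  assumes obey: "\<And>a w. p $ (a, w) \<noteq> 0 \<Longrightarrow> act (e a) = a"
  shows "outcome (recommendation e p) (pure_strategy act) = p"
proof -
  have "outcome (recommendation e p) (pure_strategy act) $ (x, w) = p $ (x, w)" for x w
  proof -
    have "outcome (recommendation e p) (pure_strategy act) $ (x, w)
        = (\<Sum>m\<in>UNIV. \<Sum>a\<in>UNIV. of_bool (e a = m) * (p $ (a, w) * of_bool (x = act m)))"
      by (simp only: outcome_nth recommendation_def pure_strategy_def sum_distrib_right mult.assoc)
    also have "\<dots> = (\<Sum>a\<in>UNIV. p $ (a, w) * of_bool (x = act (e a)))"
      by (subst sum.swap) (simp only: sum_of_bool_eq_mult)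
    also have "\<dots> = (\<Sum>a\<in>UNIV. of_bool (x = a) * p $ (a, w))"
      using obey by (intro sum.cong refl) force
    finally show ?thesis
      by (simp only: sum_of_bool_eq_mult)
  qed
  then show ?thesis
    by (simp add: vec_eq_iff)
qed

lemma payoff_recommendation:
  assumes "\<And>a w. p $ (a, w) \<noteq> 0 \<Longrightarrow> act (e a) = a"
  shows "payoff \<mu> u (recommendation e p) (pure_strategy act) = utility_weights \<mu> u \<bullet> p"
  by (simp add: payoff_eq_inner_outcome outcome_recommendation[where act = act and e = e, OF assms])

lemma R_BR_recommendation:
  assumes "inj e" and p: "p \<in> obedient_outcomes \<mu> uR"
    and obey: "\<And>a w. p $ (a, w) \<noteq> 0 \<Longrightarrow> act (e a) = a"
  shows "R_BR \<mu> uR (recommendation e p) (pure_strategy act)"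
  unfolding R_BR_iff[OF action_strategy_pure_strategy]
proof (intro allI impI)
  fix m a a'
  assume "0 < pure_strategy act m a"
  then have a: "a = act m"
    by (simp add: pure_strategy_def split: if_splits)
  let ?v = "posterior_value \<mu> uR (recommendation e p) m"
  show "?v a' \<le> ?v a"
  proof (cases "m \<in> range e")
    case True
    then obtain b where m: "m = e b"
      by blast
    have v: "?v z = (\<Sum>w\<in>UNIV. \<mu> w * p $ (b, w) * uR z w)" for z
      by (simp add: posterior_value_def m recommendation_apply[OF \<open>inj e\<close>])
    show ?thesis
    proof (cases "\<forall>w. p $ (b, w) = 0")
      case False
      then have "a = b"
        using a m obey by blast
      moreover have "0 \<le> (\<Sum>w\<in>UNIV. \<mu> w * (uR b w - uR a' w) * p $ (b, w))"
        using p by (simp add: mem_obedient_outcomes_iff)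
      ultimately show ?thesis
        by (simp add: v algebra_simps sum_subtractf)
    qed (simp add: v)
  next
    case False
    then show ?thesis
      by (simp add: posterior_value_def recommendation_outside_range)
  qed
qed

definition pure_outcome :: "('w::finite \<Rightarrow> 'a::finite) \<Rightarrow> real^('a \<times> 'w)" where
  "pure_outcome \<beta> = (\<chi> k. of_bool (fst k = \<beta> (snd k)))"

lemma pure_outcome_nth [simp]: "pure_outcome \<beta> $ (a, w) = of_bool (a = \<beta> w)"
  by (simp add: pure_outcome_def)

lemma recommendation_pure_outcome: "recommendation e (pure_outcome \<beta>) = pure_strategy (e \<circ> \<beta>)"
  by (auto simp: fun_eq_iff recommendation_def pure_strategy_def)

lemma payoff_le_sum_abs:
  fixes \<sigma> :: "'w::finite \<Rightarrow> 'm::finite \<Rightarrow> real"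
  assumes "profile \<sigma> \<rho>"
  shows "payoff \<mu> u \<sigma> \<rho> \<le> (\<Sum>w\<in>UNIV. \<Sum>m\<in>(UNIV :: 'm set). \<Sum>a\<in>UNIV. \<bar>\<mu> w * u a w\<bar>)"
  unfolding payoff_def
proof (intro sum_mono)
  have \<sigma>: "action_strategy \<sigma>" and \<rho>: "action_strategy \<rho>"
    using assms by (simp_all add: profile_def messaging_strategy_eq_action_strategy)
  fix w m a
  have "\<mu> w * \<sigma> w m * \<rho> m a * u a w \<le> \<bar>\<mu> w * \<sigma> w m * \<rho> m a * u a w\<bar>"
    by (rule abs_ge_self)
  also have "\<dots> = \<bar>\<mu> w * u a w\<bar> * (\<sigma> w m * \<rho> m a)"
    using \<sigma> \<rho> by (simp add: action_strategy_def abs_mult mult_ac)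
  also have "\<dots> \<le> \<bar>\<mu> w * u a w\<bar>"
    using \<sigma> \<rho> action_strategy_le_one[OF \<sigma>] action_strategy_le_one[OF \<rho>]
    by (intro mult_left_le) (auto simp: action_strategy_def intro: mult_le_one)
  finally show "\<mu> w * \<sigma> w m * \<rho> m a * u a w \<le> \<bar>\<mu> w * u a w\<bar>" .
qed

lemma payoff_le_persuasion_payoff:
  fixes \<sigma> :: "'w::finite \<Rightarrow> 'm::finite \<Rightarrow> real"
  assumes "profile \<sigma> \<rho>" "R_BR \<mu> uR \<sigma> \<rho>"
  shows "payoff \<mu> uS \<sigma> \<rho> \<le> persuasion_payoff TYPE('m) \<mu> uS uR"
  unfolding persuasion_payoff_def
proof (rule cSup_upper)
  show "payoff \<mu> uS \<sigma> \<rho> \<in> {payoff \<mu> uS \<sigma> \<rho> | (\<sigma> :: 'w \<Rightarrow> 'm \<Rightarrow> real) \<rho>. profile \<sigma> \<rho> \<and> R_BR \<mu> uR \<sigma> \<rho>}"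
    using assms by blast
  show "bdd_above {payoff \<mu> uS \<sigma> \<rho> | (\<sigma> :: 'w \<Rightarrow> 'm \<Rightarrow> real) \<rho>. profile \<sigma> \<rho> \<and> R_BR \<mu> uR \<sigma> \<rho>}"
    by (rule bdd_aboveI) (auto dest: payoff_le_sum_abs)
qed

lemma ex_inj_if_card_le:
  assumes "CARD('a::finite) \<le> CARD('b::finite)"
  shows "\<exists>e :: 'a \<Rightarrow> 'b. inj e"
  using card_le_inj[of "UNIV :: 'a set" "UNIV :: 'b set"] assms by auto

lemma inner_le_persuasion_payoff:
  assumes "CARD('a::finite) \<le> CARD('m::finite)" and p: "p \<in> obedient_outcomes \<mu> uR"
  shows "utility_weights \<mu> uS \<bullet> p \<le> persuasion_payoff TYPE('m) \<mu> uS (uR :: 'a \<Rightarrow> 'w::finite \<Rightarrow> real)"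
proof -
  obtain e :: "'a \<Rightarrow> 'm" where e: "inj e"
    using ex_inj_if_card_le[OF assms(1)] by blast
  have obey: "inv e (e a) = a" for a
    using e by simp
  have "payoff \<mu> uS (recommendation e p) (pure_strategy (inv e)) \<le> persuasion_payoff TYPE('m) \<mu> uS uR"
    using p e obey
    by (intro payoff_le_persuasion_payoff R_BR_recommendation)
      (simp_all add: profile_def messaging_strategy_recommendation action_strategy_pure_strategy)
  then show ?thesis
    by (simp add: payoff_recommendation obey)
qed

lemma optimal_outcome_in_maximizers:
  fixes \<sigma> :: "'w::finite \<Rightarrow> 'm::finite \<Rightarrow> real" and \<rho> :: "'m \<Rightarrow> 'a::finite \<Rightarrow> real"
  assumes "CARD('a) \<le> CARD('m)" "profile \<sigma> \<rho>" "R_BR \<mu> uR \<sigma> \<rho>"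
    and "payoff \<mu> uS \<sigma> \<rho> = persuasion_payoff TYPE('m) \<mu> uS uR"
  shows "outcome \<sigma> \<rho> \<in> maximizers (utility_weights \<mu> uS) (obedient_outcomes \<mu> uR)"
proof -
  have "utility_weights \<mu> uS \<bullet> q \<le> utility_weights \<mu> uS \<bullet> outcome \<sigma> \<rho>"
    if "q \<in> obedient_outcomes \<mu> uR" for q
    using inner_le_persuasion_payoff[OF assms(1) that] assms(4) by (simp add: payoff_eq_inner_outcome)
  then show ?thesis
    using outcome_in_obedient_outcomes[OF assms(2,3)] by (simp add: maximizers_def)
qed

section \<open>Optimal profiles when the optimal outcome is unique\<close>

definition optimal_outcomes :: "('w::finite \<Rightarrow> real) \<Rightarrow> ('a::finite \<Rightarrow> 'w \<Rightarrow> real) \<Rightarrow> ('a \<Rightarrow> 'w \<Rightarrow> real)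
    \<Rightarrow> (real^('a \<times> 'w)) set" where
  "optimal_outcomes \<mu> uS uR = maximizers (utility_weights \<mu> uS) (obedient_outcomes \<mu> uR)"

lemma move_mass_pos_imp:
  assumes "0 < move_mass \<rho> m x y m' z" "0 \<le> \<rho> m x" "0 < \<rho> m y"
  shows "0 < \<rho> m' z"
  using assms by (cases "m' = m"; cases "z = y"; cases "z = x") (auto simp: move_mass_def)

lemma outcome_move_mass:
  fixes \<sigma> :: "'w::finite \<Rightarrow> 'm::finite \<Rightarrow> real"
  assumes "x \<noteq> y"
  shows "outcome \<sigma> (move_mass \<rho> m x y) $ (x, w) = outcome \<sigma> \<rho> $ (x, w) - \<sigma> w m * \<rho> m x"
proof -
  have "\<sigma> w m' * move_mass \<rho> m x y m' x = \<sigma> w m' * \<rho> m' x - of_bool (m' = m) * (\<sigma> w m' * \<rho> m x)"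
    for m'
    using assms by (simp add: move_mass_def algebra_simps)
  then show ?thesis
    by (simp only: outcome_nth sum_subtractf) simp
qed

text \<open>Shifting all weight from the action that is worse for Sender to the better one keeps
  Receiver obedient, so the profile stays optimal, but it changes the outcome.\<close>
lemma optimal_profile_unmixed:
  fixes \<sigma> :: "'w::finite \<Rightarrow> 'm::finite \<Rightarrow> real" and \<rho> :: "'m \<Rightarrow> 'a::finite \<Rightarrow> real"
  assumes card: "CARD('a) \<le> CARD('m)"
    and unique: "\<forall>p\<in>optimal_outcomes \<mu> uS uR. \<forall>q\<in>optimal_outcomes \<mu> uS uR. p = q"
    and opt: "profile \<sigma> \<rho>" "R_BR \<mu> uR \<sigma> \<rho>" "payoff \<mu> uS \<sigma> \<rho> = persuasion_payoff TYPE('m) \<mu> uS uR"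
    and pos: "0 < \<sigma> w m" "0 < \<rho> m x" "0 < \<rho> m y"
  shows "x = y"
proof -
  let ?v = "posterior_value \<mu> uS \<sigma> m"
  have \<rho>: "action_strategy \<rho>"
    using opt(1) by (simp add: profile_def)
  have "x = y" if le: "?v x \<le> ?v y" and x: "0 < \<rho> m x" and y: "0 < \<rho> m y" for x y
  proof (rule ccontr)
    assume "x \<noteq> y"
    let ?\<rho> = "move_mass \<rho> m x y"
    have \<rho>': "action_strategy ?\<rho>"
      by (rule action_strategy_move_mass[OF \<rho>])
    have profile': "profile \<sigma> ?\<rho>"
      using opt(1) \<rho>' by (simp add: profile_def)
    have R_BR': "R_BR \<mu> uR \<sigma> ?\<rho>"
      using opt(2) move_mass_pos_imp[of \<rho> m x y] x y
      unfolding R_BR_iff[OF \<rho>] R_BR_iff[OF \<rho>'] by auto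
    have "payoff \<mu> uS \<sigma> \<rho> \<le> payoff \<mu> uS \<sigma> ?\<rho>"
      unfolding payoff_eq_sum_posterior_value sum_move_mass
      using x le by simp
    then have "payoff \<mu> uS \<sigma> ?\<rho> = persuasion_payoff TYPE('m) \<mu> uS uR"
      using opt(3) payoff_le_persuasion_payoff[OF profile' R_BR', of uS] by linarith
    then have "outcome \<sigma> ?\<rho> = outcome \<sigma> \<rho>"
      using unique optimal_outcome_in_maximizers[OF card] profile' R_BR' opt
      unfolding optimal_outcomes_def by blast
    then show False
      using outcome_move_mass[OF \<open>x \<noteq> y\<close>, of \<sigma> \<rho> m w] pos(1) x by simp
  qed
  then show ?thesis
    using pos(2,3) by (metis linorder_le_cases)
qed

lemma optimal_profile_pure_response:
  fixes \<sigma> :: "'w::finite \<Rightarrow> 'm::finite \<Rightarrow> real" and \<rho> :: "'m \<Rightarrow> 'a::finite \<Rightarrow> real"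
  assumes "CARD('a) \<le> CARD('m)"
    and "\<forall>p\<in>optimal_outcomes \<mu> uS uR. \<forall>q\<in>optimal_outcomes \<mu> uS uR. p = q"
    and opt: "profile \<sigma> \<rho>" "R_BR \<mu> uR \<sigma> \<rho>" "payoff \<mu> uS \<sigma> \<rho> = persuasion_payoff TYPE('m) \<mu> uS uR"
    and "0 < \<sigma> w m" "0 < \<rho> m b"
  shows "\<rho> m a = of_bool (a = b)"
  using action_strategy_point_mass[of \<rho> m b a] optimal_profile_unmixed[OF assms] opt(1)
  by (simp add: profile_def)

lemma outcome_eq_pure_outcome:
  assumes "messaging_strategy \<sigma>" and pure: "\<And>w m a. 0 < \<sigma> w m \<Longrightarrow> \<rho> m a = of_bool (a = \<beta> w)"
  shows "outcome \<sigma> \<rho> = pure_outcome \<beta>"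
proof -
  have pointwise: "\<sigma> w m * \<rho> m a = \<sigma> w m * of_bool (a = \<beta> w)" for w m a
    using assms(1) pure[of w m a]
    by (cases "0 < \<sigma> w m") (auto simp: messaging_strategy_def order.strict_iff_order)
  have "outcome \<sigma> \<rho> $ (a, w) = (\<Sum>m\<in>UNIV. \<sigma> w m) * of_bool (a = \<beta> w)" for a w
    by (simp only: outcome_nth pointwise sum_distrib_right)
  then show ?thesis
    using assms(1) by (simp add: vec_eq_iff messaging_strategy_def)
qed

lemma pure_outcome_realization:
  assumes "inj e" and p: "pure_outcome \<beta> \<in> obedient_outcomes \<mu> uR" and act: "\<And>w. act (e (\<beta> w)) = \<beta> w"
  shows "profile (pure_strategy (e \<circ> \<beta>)) (pure_strategy act)"
    and "R_BR \<mu> uR (pure_strategy (e \<circ> \<beta>)) (pure_strategy act)"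
    and "payoff \<mu> u (pure_strategy (e \<circ> \<beta>)) (pure_strategy act) = utility_weights \<mu> u \<bullet> pure_outcome \<beta>"
proof -
  have obey: "\<And>a w. pure_outcome \<beta> $ (a, w) \<noteq> 0 \<Longrightarrow> act (e a) = a"
    using act by simp
  show "profile (pure_strategy (e \<circ> \<beta>)) (pure_strategy act)"
    by (simp add: profile_def messaging_strategy_eq_action_strategy action_strategy_pure_strategy)
  show "R_BR \<mu> uR (pure_strategy (e \<circ> \<beta>)) (pure_strategy act)"
    using R_BR_recommendation[OF assms(1) p obey] by (simp add: recommendation_pure_outcome)
  show "payoff \<mu> u (pure_strategy (e \<circ> \<beta>)) (pure_strategy act) = utility_weights \<mu> u \<bullet> pure_outcome \<beta>"
    using payoff_recommendation[where p = "pure_outcome \<beta>" and act = act and e = e, OF obey]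
    by (simp add: recommendation_pure_outcome)
qed

lemma inner_obey_row_pure_outcome_neq_0:
  assumes indiff: "\<forall>S x y. S \<noteq> {} \<longrightarrow> x \<noteq> y \<longrightarrow> (\<Sum>v\<in>S. \<mu> v * (uR x v - uR y v)) \<noteq> 0"
    and "z \<in> range \<beta>" "y \<noteq> z"
  shows "outcome_row \<mu> uR (Inr (Inr (z, y))) \<bullet> pure_outcome \<beta> \<noteq> 0"
proof -
  have "{v. z = \<beta> v} \<noteq> {}"
    using assms(2) by auto
  then have "(\<Sum>v\<in>{v. z = \<beta> v}. \<mu> v * (uR z v - uR y v)) \<noteq> 0"
    using assms(3) by (intro indiff[rule_format]) auto
  then show ?thesis
    by (simp add: inner_outcome_row)
qed

text \<open>Otherwise moving a little probability in state \<open>w\<close> towards the action Sender prefers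
  would keep Receiver obedient, as Receiver is never indifferent, and raise Sender's payoff.\<close>
lemma optimal_pure_outcome_incentive_compatible:
  assumes \<mu>: "\<And>w. 0 < \<mu> w"
    and indiff: "\<forall>S x y. S \<noteq> {} \<longrightarrow> x \<noteq> y \<longrightarrow> (\<Sum>v\<in>S. \<mu> v * (uR x v - uR y v)) \<noteq> 0"
    and opt: "pure_outcome \<beta> \<in> optimal_outcomes \<mu> uS uR"
  shows "uS (\<beta> w') w \<le> uS (\<beta> w) w"
proof (rule ccontr)
  let ?p = "pure_outcome \<beta>"
  let ?r = "outcome_row \<mu> uR"
  define x b where "x = \<beta> w'" and "b = \<beta> w"
  define d where "d = axis (x, w) 1 - axis (b, w) (1 :: real)"
  assume "\<not> uS (\<beta> w') w \<le> uS (\<beta> w) w"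
  then have lt: "uS b w < uS x w"
    by (simp add: x_def b_def)
  have inner_d: "v \<bullet> d = v $ (x, w) - v $ (b, w)" for v
    by (simp add: d_def inner_diff_right inner_axis)
  have direction: "0 \<le> ?r l \<bullet> d" if active: "l \<in> active_rows ?r outcome_bound ?p" for l
  proof (cases l rule: outcome_constraint_cases)
    case total
    then show ?thesis
      by (simp add: inner_d outcome_row_def)
  next
    case (nonneg j)
    then have "?p $ j = 0"
      using active by (simp add: active_rows_def inner_outcome_row outcome_bound_def)
    then have "j \<noteq> (b, w)"
      by (auto simp: b_def)
    then show ?thesis
      by (simp add: nonneg inner_d outcome_row_def)
  next
    case (obey z y)
    then have "z \<notin> {x, b} \<or> y = z"
      using inner_obey_row_pure_outcome_neq_0[OF indiff, of z \<beta> y] active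
      by (auto simp: active_rows_def outcome_bound_def x_def b_def)
    then show ?thesis
      by (auto simp: obey inner_d outcome_row_def)
  qed
  have "?p \<in> maximizers (utility_weights \<mu> uS) (feasible_region ?r outcome_bound)"
    using opt by (simp add: optimal_outcomes_def obedient_outcomes_def)
  then have "utility_weights \<mu> uS \<bullet> d \<le> 0"
    using direction by (rule maximizer_feasible_direction)
  with \<mu>[of w] lt show False
    by (simp add: inner_d utility_weights_def)
qed

lemma message_value_point_mass:
  assumes "\<And>a. \<rho> m a = of_bool (a = c)"
  shows "message_value u \<rho> w m = u c w"
  by (simp add: message_value_def assms)

lemma optimal_cheap_talk_outcome_pure:
  fixes \<sigma> :: "'w::finite \<Rightarrow> 'm::finite \<Rightarrow> real" and \<rho> :: "'m \<Rightarrow> 'a::finite \<Rightarrow> real"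
  assumes card: "CARD('a) \<le> CARD('m)" and \<mu>: "\<And>w. 0 < \<mu> w"
    and strict: "\<And>w. inj (\<lambda>a. uS a w)"
    and unique: "\<forall>p\<in>optimal_outcomes \<mu> uS uR. \<forall>q\<in>optimal_outcomes \<mu> uS uR. p = q"
    and eq: "profile \<sigma> \<rho>" "S_BR \<mu> uS \<sigma> \<rho>" "R_BR \<mu> uR \<sigma> \<rho>"
    and opt: "payoff \<mu> uS \<sigma> \<rho> = persuasion_payoff TYPE('m) \<mu> uS uR"
  shows "\<exists>\<beta>. outcome \<sigma> \<rho> = pure_outcome \<beta>"
proof -
  have \<sigma>: "messaging_strategy \<sigma>" and \<rho>: "action_strategy \<rho>"
    using eq(1) by (simp_all add: profile_def)
  obtain b where b: "\<And>m. 0 < \<rho> m (b m)"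
    using action_strategy_ex_pos[OF \<rho>] by metis
  obtain f where f: "\<And>w. 0 < \<sigma> w (f w)"
    using action_strategy_ex_pos \<sigma> unfolding messaging_strategy_eq_action_strategy by metis
  have pure: "\<rho> m a = of_bool (a = b m)" if "0 < \<sigma> w m" for w m a
    by (rule optimal_profile_pure_response[OF card unique eq(1,3) opt that b])
  text \<open>Sender is indifferent between the messages she sends in a state, and strictly ranks
    the actions they induce, so all of them induce the same action.\<close>
  have same: "b m = b (f w)" if "0 < \<sigma> w m" for w m
  proof -
    have "message_value uS \<rho> w m = message_value uS \<rho> w (f w)"
      using \<open>0 < \<sigma> w m\<close> f[of w] eq(2) unfolding S_BR_iff[OF \<sigma> \<mu>] by (meson order.antisym)
    then have "uS (b m) w = uS (b (f w)) w"
      using pure[OF that] pure[OF f] by (simp add: message_value_point_mass)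
    then show ?thesis
      using strict[of w] by (simp add: inj_def)
  qed
  have "outcome \<sigma> \<rho> = pure_outcome (\<lambda>w. b (f w))"
    by (rule outcome_eq_pure_outcome[OF \<sigma>]) (simp add: pure same)
  then show ?thesis
    by blast
qed

lemma optimal_partitional_outcome_pure:
  fixes \<sigma> :: "'w::finite \<Rightarrow> 'm::finite \<Rightarrow> real" and \<rho> :: "'m \<Rightarrow> 'a::finite \<Rightarrow> real"
  assumes card: "CARD('a) \<le> CARD('m)"
    and unique: "\<forall>p\<in>optimal_outcomes \<mu> uS uR. \<forall>q\<in>optimal_outcomes \<mu> uS uR. p = q"
    and eq: "profile \<sigma> \<rho>" "R_BR \<mu> uR \<sigma> \<rho>" "partitional \<sigma>"
    and opt: "payoff \<mu> uS \<sigma> \<rho> = persuasion_payoff TYPE('m) \<mu> uS uR"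
  shows "\<exists>\<beta>. outcome \<sigma> \<rho> = pure_outcome \<beta>"
proof -
  have \<sigma>: "messaging_strategy \<sigma>" and \<rho>: "action_strategy \<rho>"
    using eq(1) by (simp_all add: profile_def)
  obtain f where f: "\<And>w. \<sigma> w (f w) = 1"
    using eq(3) unfolding partitional_def by metis
  have \<sigma>_pure: "\<sigma> w m = of_bool (m = f w)" for w m
    using action_strategy_eq_one_imp_point_mass[OF \<sigma>[unfolded messaging_strategy_eq_action_strategy] f]
    by simp
  obtain b where b: "\<And>m. 0 < \<rho> m (b m)"
    using action_strategy_ex_pos[OF \<rho>] by metis
  have "outcome \<sigma> \<rho> = pure_outcome (\<lambda>w. b (f w))"
  proof (rule outcome_eq_pure_outcome[OF \<sigma>])
    fix w m a
    assume "0 < \<sigma> w m"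
    then have "m = f w"
      by (simp add: \<sigma>_pure split: if_splits)
    then show "\<rho> m a = of_bool (a = b (f w))"
      using optimal_profile_pure_response[OF card unique eq(1,2) opt _ b, of w] f[of w] by simp
  qed
  then show ?thesis
    by blast
qed

lemma pure_outcome_partitional_realization:
  fixes uS uR :: "'a::finite \<Rightarrow> 'w::finite \<Rightarrow> real"
  assumes card: "CARD('a) \<le> CARD('m::finite)" and obedient: "pure_outcome \<beta> \<in> obedient_outcomes \<mu> uR"
  shows "\<exists>\<sigma> (\<rho> :: 'm \<Rightarrow> 'a \<Rightarrow> real). profile \<sigma> \<rho> \<and> R_BR \<mu> uR \<sigma> \<rho> \<and> partitional \<sigma>
           \<and> payoff \<mu> uS \<sigma> \<rho> = utility_weights \<mu> uS \<bullet> pure_outcome \<beta>"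
proof -
  obtain e :: "'a \<Rightarrow> 'm" where e: "inj e"
    using ex_inj_if_card_le[OF card] by blast
  have "inv e (e (\<beta> w)) = \<beta> w" for w
    using e by simp
  then show ?thesis
    using pure_outcome_realization[OF e obedient] partitional_pure_strategy by metis
qed

lemma optimal_pure_outcome_cheap_talk_realization:
  fixes uS uR :: "'a::finite \<Rightarrow> 'w::finite \<Rightarrow> real"
  assumes card: "CARD('a) \<le> CARD('m::finite)" and \<mu>: "\<And>w. 0 < \<mu> w"
    and indiff: "\<forall>S x y. S \<noteq> {} \<longrightarrow> x \<noteq> y \<longrightarrow> (\<Sum>v\<in>S. \<mu> v * (uR x v - uR y v)) \<noteq> 0"
    and optimal: "pure_outcome \<beta> \<in> optimal_outcomes \<mu> uS uR"
  shows "\<exists>\<sigma> (\<rho> :: 'm \<Rightarrow> 'a \<Rightarrow> real). profile \<sigma> \<rho> \<and> S_BR \<mu> uS \<sigma> \<rho> \<and> R_BR \<mu> uR \<sigma> \<rho>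
           \<and> payoff \<mu> uS \<sigma> \<rho> = utility_weights \<mu> uS \<bullet> pure_outcome \<beta>"
proof -
  have obedient: "pure_outcome \<beta> \<in> obedient_outcomes \<mu> uR"
    using optimal by (simp add: optimal_outcomes_def maximizers_def)
  obtain e :: "'a \<Rightarrow> 'm" where e: "inj e"
    using ex_inj_if_card_le[OF card] by blast
  text \<open>Every message, sent or not, is answered by an action that Sender induces in some
    state, so incentive compatibility rules out profitable deviations.\<close>
  define act where "act = \<beta> \<circ> inv (e \<circ> \<beta>)"
  have act: "act (e (\<beta> w)) = \<beta> w" for w
  proof -
    have "(e \<circ> \<beta>) (inv (e \<circ> \<beta>) ((e \<circ> \<beta>) w)) = (e \<circ> \<beta>) w"
      by (rule f_inv_into_f) simp
    then show ?thesis
      using e by (simp add: act_def inj_eq)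
  qed
  have "S_BR \<mu> uS (pure_strategy (e \<circ> \<beta>)) (pure_strategy act)"
    unfolding S_BR_iff[OF action_strategy_pure_strategy[folded messaging_strategy_eq_action_strategy] \<mu>]
  proof (intro allI impI)
    fix w m m'
    assume "0 < pure_strategy (e \<circ> \<beta>) w m"
    then have "m = e (\<beta> w)"
      by (simp add: pure_strategy_def split: if_splits)
    then show "message_value uS (pure_strategy act) w m' \<le> message_value uS (pure_strategy act) w m"
      using optimal_pure_outcome_incentive_compatible[OF \<mu> indiff optimal]
      by (simp add: message_value_pure_strategy act) (simp add: act_def)
  qed
  then show ?thesis
    using pure_outcome_realization[OF e obedient act] by metis
qed

lemma optimal_cheap_talk_imp_partitional:
  fixes \<sigma> :: "'w::finite \<Rightarrow> 'm::finite \<Rightarrow> real" and \<rho> :: "'m \<Rightarrow> 'a::finite \<Rightarrow> real"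
  assumes card: "CARD('a) \<le> CARD('m)" and \<mu>: "\<And>w. 0 < \<mu> w"
    and strict: "\<And>w. inj (\<lambda>a. uS a w)"
    and unique: "\<forall>p\<in>optimal_outcomes \<mu> uS uR. \<forall>q\<in>optimal_outcomes \<mu> uS uR. p = q"
    and eq: "profile \<sigma> \<rho>" "S_BR \<mu> uS \<sigma> \<rho>" "R_BR \<mu> uR \<sigma> \<rho>"
    and opt: "payoff \<mu> uS \<sigma> \<rho> = persuasion_payoff TYPE('m) \<mu> uS uR"
  shows "\<exists>\<sigma>' (\<rho>' :: 'm \<Rightarrow> 'a \<Rightarrow> real). profile \<sigma>' \<rho>' \<and> R_BR \<mu> uR \<sigma>' \<rho>' \<and> partitional \<sigma>'
           \<and> payoff \<mu> uS \<sigma>' \<rho>' = persuasion_payoff TYPE('m) \<mu> uS uR"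
proof -
  obtain \<beta> where \<beta>: "outcome \<sigma> \<rho> = pure_outcome \<beta>"
    using optimal_cheap_talk_outcome_pure[OF assms] by blast
  then have "pure_outcome \<beta> \<in> obedient_outcomes \<mu> uR"
    using outcome_in_obedient_outcomes[OF eq(1,3)] by simp
  moreover have "utility_weights \<mu> uS \<bullet> pure_outcome \<beta> = persuasion_payoff TYPE('m) \<mu> uS uR"
    using opt \<beta> by (simp add: payoff_eq_inner_outcome)
  ultimately show ?thesis
    using pure_outcome_partitional_realization[OF card] by metis
qed

lemma optimal_partitional_imp_cheap_talk:
  fixes \<sigma> :: "'w::finite \<Rightarrow> 'm::finite \<Rightarrow> real" and \<rho> :: "'m \<Rightarrow> 'a::finite \<Rightarrow> real"
  assumes card: "CARD('a) \<le> CARD('m)" and \<mu>: "\<And>w. 0 < \<mu> w"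
    and indiff: "\<forall>S x y. S \<noteq> {} \<longrightarrow> x \<noteq> y \<longrightarrow> (\<Sum>v\<in>S. \<mu> v * (uR x v - uR y v)) \<noteq> 0"
    and unique: "\<forall>p\<in>optimal_outcomes \<mu> uS uR. \<forall>q\<in>optimal_outcomes \<mu> uS uR. p = q"
    and eq: "profile \<sigma> \<rho>" "R_BR \<mu> uR \<sigma> \<rho>" "partitional \<sigma>"
    and opt: "payoff \<mu> uS \<sigma> \<rho> = persuasion_payoff TYPE('m) \<mu> uS uR"
  shows "\<exists>\<sigma>' (\<rho>' :: 'm \<Rightarrow> 'a \<Rightarrow> real). profile \<sigma>' \<rho>' \<and> S_BR \<mu> uS \<sigma>' \<rho>' \<and> R_BR \<mu> uR \<sigma>' \<rho>'
           \<and> payoff \<mu> uS \<sigma>' \<rho>' = persuasion_payoff TYPE('m) \<mu> uS uR"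
proof -
  obtain \<beta> where \<beta>: "outcome \<sigma> \<rho> = pure_outcome \<beta>"
    using optimal_partitional_outcome_pure[OF card unique eq opt] by blast
  then have "pure_outcome \<beta> \<in> optimal_outcomes \<mu> uS uR"
    using optimal_outcome_in_maximizers[OF card eq(1,2) opt] by (simp add: optimal_outcomes_def)
  moreover have "utility_weights \<mu> uS \<bullet> pure_outcome \<beta> = persuasion_payoff TYPE('m) \<mu> uS uR"
    using opt \<beta> by (simp add: payoff_eq_inner_outcome)
  ultimately show ?thesis
    using optimal_pure_outcome_cheap_talk_realization[OF card \<mu> indiff] by metis
qed

section \<open>Existence of optimal profiles\<close>

text \<open>Profiles are coded as points of a Euclidean space, so that the existence of optimal
  profiles in a class becomes a compactness statement.\<close>
definition encode_profile :: "('w::finite \<Rightarrow> 'm::finite \<Rightarrow> real) \<Rightarrow> ('m \<Rightarrow> 'a::finite \<Rightarrow> real) \<Rightarrow> real^(('w \<times> 'm) + ('m \<times> 'a))" where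
  "encode_profile \<sigma> \<rho> = (\<chi> i. case i of Inl (w, m) \<Rightarrow> \<sigma> w m | Inr (m, a) \<Rightarrow> \<rho> m a)"

definition decode_messaging :: "real^(('w::finite \<times> 'm::finite) + ('m \<times> 'a::finite)) \<Rightarrow> 'w \<Rightarrow> 'm \<Rightarrow> real" where
  "decode_messaging v w m = v $ Inl (w, m)"

definition decode_action :: "real^(('w::finite \<times> 'm::finite) + ('m \<times> 'a::finite)) \<Rightarrow> 'm \<Rightarrow> 'a \<Rightarrow> real" where
  "decode_action v m a = v $ Inr (m, a)"

lemma decode_encode_profile [simp]:
  "decode_messaging (encode_profile \<sigma> \<rho>) = \<sigma>" "decode_action (encode_profile \<sigma> \<rho>) = \<rho>"
  by (simp_all add: fun_eq_iff encode_profile_def decode_messaging_def decode_action_def)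

lemma continuous_on_payoff_decode:
  "continuous_on UNIV (\<lambda>v. payoff \<mu> u (decode_messaging v) (decode_action v))"
  unfolding payoff_def decode_messaging_def decode_action_def by (intro continuous_intros)

lemma closed_profile_decode: "closed {v. profile (decode_messaging v) (decode_action v)}"
  unfolding profile_def messaging_strategy_def action_strategy_def decode_messaging_def decode_action_def
  by (intro closed_Collect_conj closed_Collect_all closed_Collect_le closed_Collect_eq continuous_intros)

lemma closed_R_BR_decode: "closed {v. R_BR \<mu> u (decode_messaging v) (decode_action v)}"
  unfolding R_BR_def
proof (intro closed_Collect_all)
  fix \<rho>'
  show "closed {v. action_strategy \<rho>' \<longrightarrow>
          payoff \<mu> u (decode_messaging v) \<rho>' \<le> payoff \<mu> u (decode_messaging v) (decode_action v)}"
    by (cases "action_strategy \<rho>'")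
      (simp_all add: payoff_def decode_messaging_def decode_action_def closed_Collect_le continuous_intros)
qed

lemma closed_S_BR_decode: "closed {v. S_BR \<mu> u (decode_messaging v) (decode_action v)}"
  unfolding S_BR_def
proof (intro closed_Collect_all)
  fix \<sigma>'
  show "closed {v. messaging_strategy \<sigma>' \<longrightarrow>
          payoff \<mu> u \<sigma>' (decode_action v) \<le> payoff \<mu> u (decode_messaging v) (decode_action v)}"
    by (cases "messaging_strategy \<sigma>'")
      (simp_all add: payoff_def decode_messaging_def decode_action_def closed_Collect_le continuous_intros)
qed

lemma closed_partitional_decode:
  "closed {v :: real^(('w::finite \<times> 'm::finite) + ('m \<times> 'a::finite)). partitional (decode_messaging v)}"
proof -
  have "{v :: real^(('w \<times> 'm) + ('m \<times> 'a)). partitional (decode_messaging v)} = (\<Inter>w. \<Union>m. {v. v $ Inl (w, m) = 1})"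
    by (auto simp: partitional_def decode_messaging_def)
  then show ?thesis
    by (simp add: closed_INT closed_UN closed_Collect_eq continuous_on_component)
qed

lemma profile_decode_in_unit_box:
  assumes "profile (decode_messaging v) (decode_action v)"
  shows "v \<in> cbox 0 1"
proof -
  have \<sigma>: "action_strategy (decode_messaging v)" and \<rho>: "action_strategy (decode_action v)"
    using assms by (simp_all add: profile_def messaging_strategy_eq_action_strategy)
  have "0 \<le> v $ i \<and> v $ i \<le> 1" for i
  proof (cases i)
    case (Inl wm)
    then show ?thesis
      using \<sigma> action_strategy_le_one[OF \<sigma>, of "fst wm" "snd wm"]
      by (cases wm) (simp add: decode_messaging_def action_strategy_def)
  next
    case (Inr ma)
    then show ?thesis
      using \<rho> action_strategy_le_one[OF \<rho>, of "fst ma" "snd ma"]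
      by (cases ma) (simp add: decode_action_def action_strategy_def)
  qed
  then show ?thesis
    by (simp add: mem_box_cart)
qed

lemma Sup_payoff_attained:
  fixes Q :: "('w::finite \<Rightarrow> 'm::finite \<Rightarrow> real) \<Rightarrow> ('m \<Rightarrow> 'a::finite \<Rightarrow> real) \<Rightarrow> bool"
  assumes closed: "closed {v. Q (decode_messaging v) (decode_action v)}"
    and nonempty: "Q \<sigma>0 \<rho>0" and profile: "\<And>\<sigma> \<rho>. Q \<sigma> \<rho> \<Longrightarrow> profile \<sigma> \<rho>"
  shows "\<exists>\<sigma> \<rho>. Q \<sigma> \<rho> \<and> payoff \<mu> u \<sigma> \<rho> = Sup {payoff \<mu> u \<sigma> \<rho> | \<sigma> \<rho>. Q \<sigma> \<rho>}"
proof -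
  let ?K = "{v. Q (decode_messaging v) (decode_action v)}"
  let ?f = "\<lambda>v. payoff \<mu> u (decode_messaging v) (decode_action v)"
  have "?K \<subseteq> cbox 0 1"
    using profile profile_decode_in_unit_box by blast
  then have "compact ?K"
    using closed by (meson bounded_cbox bounded_subset compact_eq_bounded_closed)
  moreover have "encode_profile \<sigma>0 \<rho>0 \<in> ?K"
    using nonempty by simp
  ultimately obtain v where v: "v \<in> ?K" and max: "\<And>v'. v' \<in> ?K \<Longrightarrow> ?f v' \<le> ?f v"
    using continuous_attains_sup[of ?K ?f] continuous_on_subset[OF continuous_on_payoff_decode]
    by blast
  have "payoff \<mu> u \<sigma> \<rho> \<le> ?f v" if "Q \<sigma> \<rho>" for \<sigma> \<rho>
    using max[of "encode_profile \<sigma> \<rho>"] that by simp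
  then have "?f v = Sup {payoff \<mu> u \<sigma> \<rho> | \<sigma> \<rho>. Q \<sigma> \<rho>}"
    using v by (intro cSup_eq_maximum[symmetric]) auto
  with v show ?thesis
    by blast
qed

lemma payoff_le_Sup_payoff:
  fixes \<sigma> :: "'w::finite \<Rightarrow> 'm::finite \<Rightarrow> real" and \<rho> :: "'m \<Rightarrow> 'a::finite \<Rightarrow> real"
  assumes "\<And>\<sigma> \<rho>. Q \<sigma> \<rho> \<Longrightarrow> profile \<sigma> \<rho>" and "Q \<sigma> \<rho>"
  shows "payoff \<mu> u \<sigma> \<rho> \<le> Sup {payoff \<mu> u \<sigma> \<rho> | (\<sigma> :: 'w \<Rightarrow> 'm \<Rightarrow> real) \<rho>. Q \<sigma> \<rho>}"
  using assms by (intro cSup_upper bdd_aboveI) (auto dest: payoff_le_sum_abs)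

lemma babbling_equilibrium:
  fixes \<mu> :: "'w::finite \<Rightarrow> real" and uS uR :: "'a::finite \<Rightarrow> 'w \<Rightarrow> real"
  assumes \<mu>: "\<And>w. 0 < \<mu> w"
  shows "\<exists>(\<sigma> :: 'w \<Rightarrow> 'm::finite \<Rightarrow> real) \<rho>.
           profile \<sigma> \<rho> \<and> S_BR \<mu> uS \<sigma> \<rho> \<and> R_BR \<mu> uR \<sigma> \<rho> \<and> partitional \<sigma>"
proof -
  obtain b where b: "\<And>a. (\<Sum>w\<in>UNIV. \<mu> w * uR a w) \<le> (\<Sum>w\<in>UNIV. \<mu> w * uR b w)"
    using ex_greatest_value[of "\<lambda>a. \<Sum>w\<in>UNIV. \<mu> w * uR a w"] by metis
  let ?\<sigma> = "pure_strategy (\<lambda>_. undefined) :: 'w \<Rightarrow> 'm \<Rightarrow> real"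
  let ?\<rho> = "pure_strategy (\<lambda>_. b) :: 'm \<Rightarrow> 'a \<Rightarrow> real"
  have \<sigma>: "messaging_strategy ?\<sigma>"
    by (simp add: messaging_strategy_eq_action_strategy action_strategy_pure_strategy)
  have "posterior_value \<mu> uR ?\<sigma> m a = of_bool (m = undefined) * (\<Sum>w\<in>UNIV. \<mu> w * uR a w)" for m a
    by (simp add: posterior_value_def pure_strategy_def sum_distrib_left mult_ac)
  then have "R_BR \<mu> uR ?\<sigma> ?\<rho>"
    by (simp add: R_BR_iff[OF action_strategy_pure_strategy] pure_strategy_def b)
  moreover have "S_BR \<mu> uS ?\<sigma> ?\<rho>"
    by (simp add: S_BR_iff[OF \<sigma> \<mu>] message_value_pure_strategy)
  ultimately show ?thesis
    using \<sigma> action_strategy_pure_strategy partitional_pure_strategy by (metis profile_def)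
qed

section \<open>Commitment and randomization in generic environments\<close>

definition generic :: "('w::finite \<Rightarrow> real) \<Rightarrow> ('a::finite \<Rightarrow> 'w \<Rightarrow> real) \<Rightarrow> ('a \<Rightarrow> 'w \<Rightarrow> real) \<Rightarrow> bool" where
  "generic \<mu> uS uR \<longleftrightarrow>
     (\<forall>w. inj (\<lambda>a. uS a w)) \<and>
     (\<forall>S x y. S \<noteq> {} \<longrightarrow> x \<noteq> y \<longrightarrow> (\<Sum>v\<in>S. \<mu> v * (uR x v - uR y v)) \<noteq> 0) \<and>
     (\<forall>p\<in>optimal_outcomes \<mu> uS uR. \<forall>q\<in>optimal_outcomes \<mu> uS uR. p = q)"

lemma payoff_le_partitional_persuasion_payoff:
  fixes \<sigma> :: "'w::finite \<Rightarrow> 'm::finite \<Rightarrow> real"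
  assumes "profile \<sigma> \<rho>" "R_BR \<mu> uR \<sigma> \<rho>" "partitional \<sigma>"
  shows "payoff \<mu> uS \<sigma> \<rho> \<le> partitional_persuasion_payoff TYPE('m) \<mu> uS uR"
  unfolding partitional_persuasion_payoff_def by (rule payoff_le_Sup_payoff) (use assms in auto)

lemma payoff_le_cheap_talk_payoff:
  fixes \<sigma> :: "'w::finite \<Rightarrow> 'm::finite \<Rightarrow> real"
  assumes "profile \<sigma> \<rho>" "S_BR \<mu> uS \<sigma> \<rho>" "R_BR \<mu> uR \<sigma> \<rho>"
  shows "payoff \<mu> uS \<sigma> \<rho> \<le> cheap_talk_payoff TYPE('m) \<mu> uS uR"
  unfolding cheap_talk_payoff_def by (rule payoff_le_Sup_payoff) (use assms in auto)

lemma partitional_persuasion_payoff_attained: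
  fixes \<mu> :: "'w::finite \<Rightarrow> real" and uS uR :: "'a::finite \<Rightarrow> 'w \<Rightarrow> real"
  assumes "\<And>w. 0 < \<mu> w"
  shows "\<exists>(\<sigma> :: 'w \<Rightarrow> 'm::finite \<Rightarrow> real) \<rho>. profile \<sigma> \<rho> \<and> R_BR \<mu> uR \<sigma> \<rho> \<and> partitional \<sigma>
           \<and> payoff \<mu> uS \<sigma> \<rho> = partitional_persuasion_payoff TYPE('m) \<mu> uS uR"
proof -
  obtain \<sigma>0 :: "'w \<Rightarrow> 'm \<Rightarrow> real" and \<rho>0
    where "profile \<sigma>0 \<rho>0" "R_BR \<mu> uR \<sigma>0 \<rho>0" "partitional \<sigma>0"
    using babbling_equilibrium[of \<mu> uS uR] assms by blast
  then show ?thesis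
    using Sup_payoff_attained[of "\<lambda>\<sigma> \<rho>. profile \<sigma> \<rho> \<and> R_BR \<mu> uR \<sigma> \<rho> \<and> partitional \<sigma>" \<sigma>0 \<rho>0 \<mu> uS]
    by (auto simp: partitional_persuasion_payoff_def closed_Collect_conj closed_profile_decode
        closed_R_BR_decode closed_partitional_decode)
qed

lemma cheap_talk_payoff_attained:
  fixes \<mu> :: "'w::finite \<Rightarrow> real" and uS uR :: "'a::finite \<Rightarrow> 'w \<Rightarrow> real"
  assumes "\<And>w. 0 < \<mu> w"
  shows "\<exists>(\<sigma> :: 'w \<Rightarrow> 'm::finite \<Rightarrow> real) \<rho>. profile \<sigma> \<rho> \<and> S_BR \<mu> uS \<sigma> \<rho> \<and> R_BR \<mu> uR \<sigma> \<rho>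
           \<and> payoff \<mu> uS \<sigma> \<rho> = cheap_talk_payoff TYPE('m) \<mu> uS uR"
proof -
  obtain \<sigma>0 :: "'w \<Rightarrow> 'm \<Rightarrow> real" and \<rho>0
    where "profile \<sigma>0 \<rho>0" "S_BR \<mu> uS \<sigma>0 \<rho>0" "R_BR \<mu> uR \<sigma>0 \<rho>0"
    using babbling_equilibrium[of \<mu> uS uR] assms by blast
  then show ?thesis
    using Sup_payoff_attained[of "\<lambda>\<sigma> \<rho>. profile \<sigma> \<rho> \<and> S_BR \<mu> uS \<sigma> \<rho> \<and> R_BR \<mu> uR \<sigma> \<rho>" \<sigma>0 \<rho>0 \<mu> uS]
    by (auto simp: cheap_talk_payoff_def closed_Collect_conj closed_profile_decode
        closed_S_BR_decode closed_R_BR_decode)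
qed

lemma commitment_valuable_iff_values_randomization_if_generic:
  fixes \<mu> :: "'w::finite \<Rightarrow> real" and uS uR :: "'a::finite \<Rightarrow> 'w \<Rightarrow> real"
  assumes card: "CARD('a) \<le> CARD('m::finite)" and \<mu>: "\<And>w. 0 < \<mu> w"
    and "generic \<mu> uS uR"
  shows "commitment_valuable TYPE('m) \<mu> uS uR \<longleftrightarrow> values_randomization TYPE('m) \<mu> uS uR"
proof -
  have strict: "\<And>w. inj (\<lambda>a. uS a w)"
    and indiff: "\<forall>S x y. S \<noteq> {} \<longrightarrow> x \<noteq> y \<longrightarrow> (\<Sum>v\<in>S. \<mu> v * (uR x v - uR y v)) \<noteq> 0"
    and unique: "\<forall>p\<in>optimal_outcomes \<mu> uS uR. \<forall>q\<in>optimal_outcomes \<mu> uS uR. p = q"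
    using \<open>generic \<mu> uS uR\<close> by (simp_all add: generic_def)
  let ?V = "persuasion_payoff TYPE('m) \<mu> uS uR"
  let ?VP = "partitional_persuasion_payoff TYPE('m) \<mu> uS uR"
  let ?VC = "cheap_talk_payoff TYPE('m) \<mu> uS uR"
  obtain \<sigma>P :: "'w \<Rightarrow> 'm \<Rightarrow> real" and \<rho>P
    where P: "profile \<sigma>P \<rho>P" "R_BR \<mu> uR \<sigma>P \<rho>P" "partitional \<sigma>P" and VP: "payoff \<mu> uS \<sigma>P \<rho>P = ?VP"
    using partitional_persuasion_payoff_attained[where \<mu> = \<mu> and uS = uS and uR = uR, OF \<mu>] by blast
  obtain \<sigma>C :: "'w \<Rightarrow> 'm \<Rightarrow> real" and \<rho>C
    where C: "profile \<sigma>C \<rho>C" "S_BR \<mu> uS \<sigma>C \<rho>C" "R_BR \<mu> uR \<sigma>C \<rho>C" and VC: "payoff \<mu> uS \<sigma>C \<rho>C = ?VC"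
    using cheap_talk_payoff_attained[where \<mu> = \<mu> and uS = uS and uR = uR, OF \<mu>] by blast
  have "?VP \<le> ?V" "?VC \<le> ?V"
    using payoff_le_persuasion_payoff P C VP VC by metis+
  moreover have "?V \<le> ?VC" if "?VP = ?V"
    using optimal_partitional_imp_cheap_talk[OF card \<mu> indiff unique P] VP that
      payoff_le_cheap_talk_payoff by metis
  moreover have "?V \<le> ?VP" if "?VC = ?V"
    using optimal_cheap_talk_imp_partitional[OF card \<mu> strict unique C] VC that
      payoff_le_partitional_persuasion_payoff by metis
  ultimately show ?thesis
    unfolding commitment_valuable_def values_randomization_def by fastforce
qed

section \<open>Almost every environment is generic\<close>

lemma null_sets_PiM_coordinate_graph:
  fixes f :: "('i::finite \<Rightarrow> real) \<Rightarrow> real"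
  assumes f: "f \<in> borel_measurable (PiM UNIV (\<lambda>_. lborel))"
    and indep: "\<And>x t. f (x(i := t)) = f x"
  shows "{x. x i = f x} \<in> null_sets (PiM UNIV (\<lambda>_. lborel))"
proof -
  interpret product_sigma_finite "\<lambda>_ :: 'i. lborel"
    by standard
  let ?G = "{x. x i = f x}"
  have G: "?G \<in> sets (PiM UNIV (\<lambda>_. lborel))"
  proof -
    have "{x \<in> space (PiM UNIV (\<lambda>_. lborel)). x i = f x} \<in> sets (PiM UNIV (\<lambda>_. lborel))"
      using f by measurable
    then show ?thesis
      by (simp add: space_PiM)
  qed
  have UNIV_eq: "(UNIV :: 'i set) = insert i (UNIV - {i})"
    by auto
  text \<open>Fubini: integrate first over the coordinate \<open>i\<close>, on which the graph is a single point.\<close>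
  have "emeasure (PiM UNIV (\<lambda>_. lborel)) ?G = (\<integral>\<^sup>+ x. indicator ?G x \<partial>PiM UNIV (\<lambda>_. lborel))"
    using G by simp
  also have "\<dots> = (\<integral>\<^sup>+ x. (\<integral>\<^sup>+ t. indicator ?G (x(i := t)) \<partial>lborel) \<partial>PiM (UNIV - {i}) (\<lambda>_. lborel))"
    by (subst UNIV_eq, rule product_nn_integral_insert)
      (use G UNIV_eq in \<open>auto simp del: insert_Diff_single\<close>)
  also have "\<dots> = (\<integral>\<^sup>+ x. (\<integral>\<^sup>+ t. indicator {f x} t \<partial>lborel) \<partial>PiM (UNIV - {i}) (\<lambda>_. lborel))"
    by (intro nn_integral_cong) (auto simp: indicator_def indep)
  also have "\<dots> = 0"
    by simp
  finally show ?thesis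
    using G by blast
qed

lemma AE_PiM_coordinate_affine_neq_0:
  fixes g h :: "('i::finite \<Rightarrow> real) \<Rightarrow> real"
  assumes "g \<in> borel_measurable (PiM UNIV (\<lambda>_. lborel))" "h \<in> borel_measurable (PiM UNIV (\<lambda>_. lborel))"
    and "\<And>x t. g (x(i := t)) = g x" "\<And>x t. h (x(i := t)) = h x"
  shows "AE x in PiM UNIV (\<lambda>_. lborel). h x \<noteq> 0 \<longrightarrow> h x * x i + g x \<noteq> 0"
proof -
  have "{x. x i = - g x / h x} \<in> null_sets (PiM UNIV (\<lambda>_. lborel))"
    using assms by (intro null_sets_PiM_coordinate_graph) auto
  then have "AE x in PiM UNIV (\<lambda>_. lborel). x i \<noteq> - g x / h x"
    by (rule AE_not_in[THEN AE_mp]) simp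
  then show ?thesis
    by (rule AE_mp) (auto simp: field_simps)
qed

lemma borel_measurable_gram_solution:
  fixes r :: "'x \<Rightarrow> 'l::finite \<Rightarrow> real^'n"
  assumes "\<And>l i. (\<lambda>x. r x l $ i) \<in> borel_measurable M"
  shows "(\<lambda>x. gram_solution (r x) b A $ k) \<in> borel_measurable M"
proof -
  have [measurable]: "(\<lambda>x. gram_matrix (r x) A $ i $ j) \<in> borel_measurable M" for i j
    using assms unfolding gram_matrix_def by simp measurable
  have [measurable]: "(\<lambda>x. gram_rhs (r x) b A $ i) \<in> borel_measurable M" for i
    using assms unfolding gram_rhs_def by simp measurable
  show ?thesis
    unfolding gram_solution_def det_def by simp measurable
qed

abbreviation environment_measure :: "(bool \<times> 'a::finite \<times> 'w::finite \<Rightarrow> real) measure" where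
  "environment_measure \<equiv> PiM UNIV (\<lambda>_. lborel)"

lemma borel_measurable_outcome_row:
  "(\<lambda>e. outcome_row \<mu> (env_R e) l $ k) \<in> borel_measurable environment_measure"
proof (cases l rule: outcome_constraint_cases)
  case obey
  then show ?thesis
    unfolding outcome_row_def env_R_def by simp measurable
qed (simp_all add: outcome_row_def)

lemma AE_env_S_inj: "AE e in environment_measure. \<forall>w. inj (\<lambda>a. env_S e a w)"
proof -
  have "AE e in environment_measure. a \<noteq> a' \<longrightarrow> e (True, a, w) \<noteq> e (True, a', w)" for w a a'
  proof (cases "a = a'")
    case False
    have "AE e in environment_measure. 1 \<noteq> (0 :: real) \<longrightarrow> 1 * e (True, a, w) + - e (True, a', w) \<noteq> 0"
      by (rule AE_PiM_coordinate_affine_neq_0) (use False in auto)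
    then show ?thesis
      by (rule AE_mp) auto
  qed simp
  then have "AE e in environment_measure. \<forall>w a a'. a \<noteq> a' \<longrightarrow> e (True, a, w) \<noteq> e (True, a', w)"
    by (intro eventually_all_finite)
  then show ?thesis
    by (rule AE_mp) (auto simp: inj_def env_S_def)
qed

lemma AE_env_R_never_indifferent:
  assumes \<mu>: "\<And>w. 0 < \<mu> w"
  shows "AE e in environment_measure.
           \<forall>S x y. S \<noteq> {} \<longrightarrow> x \<noteq> y \<longrightarrow> (\<Sum>v\<in>S. \<mu> v * (env_R e x v - env_R e y v)) \<noteq> 0"
proof -
  have "AE e in environment_measure.
          S \<noteq> {} \<longrightarrow> x \<noteq> y \<longrightarrow> (\<Sum>v\<in>S. \<mu> v * (env_R e x v - env_R e y v)) \<noteq> 0" for S x y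
  proof (cases "S \<noteq> {} \<and> x \<noteq> y")
    case True
    then obtain v0 where v0: "v0 \<in> S"
      by blast
    let ?g = "\<lambda>e. - (\<mu> v0 * e (False, y, v0)) + (\<Sum>v\<in>S - {v0}. \<mu> v * (e (False, x, v) - e (False, y, v)))"
    have "AE e in environment_measure. \<mu> v0 \<noteq> 0 \<longrightarrow> \<mu> v0 * e (False, x, v0) + ?g e \<noteq> 0"
      by (rule AE_PiM_coordinate_affine_neq_0) (use True in \<open>auto intro!: sum.cong\<close>)
    moreover have "(\<Sum>v\<in>S. \<mu> v * (env_R e x v - env_R e y v)) = \<mu> v0 * e (False, x, v0) + ?g e" for e
      using v0 by (simp add: sum.remove env_R_def algebra_simps)
    ultimately show ?thesis
      using \<mu>[of v0] by (auto elim: AE_mp)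
  qed auto
  then show ?thesis
    by (intro eventually_all_finite)
qed

lemma env_R_fun_upd_True: "env_R (e((True, a, w) := t)) = env_R e"
  by (simp add: fun_eq_iff env_R_def)

lemma inner_utility_weights_env_S:
  "utility_weights \<mu> (env_S e) \<bullet> v = (\<Sum>j\<in>UNIV. \<mu> (snd j) * e (True, fst j, snd j) * v $ j)"
  by (simp add: utility_weights_def inner_vec_def env_S_def)

text \<open>The solution of the constraints in \<open>A\<close>; every vertex of the obedient outcomes is of this
  form, and it depends on Receiver's utility only.\<close>
definition outcome_vertex :: "('w::finite \<Rightarrow> real) \<Rightarrow> ('a::finite \<Rightarrow> 'w \<Rightarrow> real)
    \<Rightarrow> ('a, 'w) outcome_constraint set \<Rightarrow> real^('a \<times> 'w)" where
  "outcome_vertex \<mu> uR A = gram_solution (outcome_row \<mu> uR) outcome_bound A"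

lemma borel_measurable_outcome_vertex [measurable]:
  "(\<lambda>e. outcome_vertex \<mu> (env_R e) A $ j) \<in> borel_measurable environment_measure"
  unfolding outcome_vertex_def by (rule borel_measurable_gram_solution[OF borel_measurable_outcome_row])

lemma AE_outcome_vertex_values_differ:
  assumes \<mu>: "\<And>w. 0 < \<mu> w"
  shows "AE e in environment_measure.
           outcome_vertex \<mu> (env_R e) A $ k \<noteq> outcome_vertex \<mu> (env_R e) B $ k \<longrightarrow>
           utility_weights \<mu> (env_S e) \<bullet> outcome_vertex \<mu> (env_R e) A
             \<noteq> utility_weights \<mu> (env_S e) \<bullet> outcome_vertex \<mu> (env_R e) B"
proof -
  let ?d = "\<lambda>e. outcome_vertex \<mu> (env_R e) A - outcome_vertex \<mu> (env_R e) B"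
  obtain a w where k: "k = (a, w)"
    by (cases k)
  let ?h = "\<lambda>e. \<mu> w * ?d e $ k"
  let ?g = "\<lambda>e. \<Sum>j\<in>UNIV - {k}. \<mu> (snd j) * e (True, fst j, snd j) * ?d e $ j"
  have diff: "utility_weights \<mu> (env_S e) \<bullet> ?d e = ?h e * e (True, a, w) + ?g e" for e
    by (simp add: inner_utility_weights_env_S sum.remove[of UNIV k] k algebra_simps sum_subtractf)
  have "AE e in environment_measure. ?h e \<noteq> 0 \<longrightarrow> ?h e * e (True, a, w) + ?g e \<noteq> 0"
    by (rule AE_PiM_coordinate_affine_neq_0)
      (auto simp: env_R_fun_upd_True k intro!: sum.cong)
  then have "AE e in environment_measure. ?h e \<noteq> 0 \<longrightarrow> utility_weights \<mu> (env_S e) \<bullet> ?d e \<noteq> 0"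
    by (simp only: diff)
  then show ?thesis
    by (rule AE_mp) (use \<mu>[of w] in \<open>auto simp: inner_diff_right\<close>)
qed

lemma AE_unique_optimal_outcome:
  assumes "\<And>w. 0 < \<mu> w"
  shows "AE e in environment_measure.
           \<forall>p\<in>optimal_outcomes \<mu> (env_S e) (env_R e). \<forall>q\<in>optimal_outcomes \<mu> (env_S e) (env_R e). p = q"
proof -
  have "AE e in environment_measure. \<forall>A B k.
          outcome_vertex \<mu> (env_R e) A $ k \<noteq> outcome_vertex \<mu> (env_R e) B $ k \<longrightarrow>
          utility_weights \<mu> (env_S e) \<bullet> outcome_vertex \<mu> (env_R e) A
            \<noteq> utility_weights \<mu> (env_S e) \<bullet> outcome_vertex \<mu> (env_R e) B"
    using AE_outcome_vertex_values_differ[OF assms] by (intro eventually_all_finite)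
  then show ?thesis
  proof (rule AE_mp, intro AE_I2 impI ballI)
    fix e p q
    assume "\<forall>A B k. outcome_vertex \<mu> (env_R e) A $ k \<noteq> outcome_vertex \<mu> (env_R e) B $ k \<longrightarrow>
          utility_weights \<mu> (env_S e) \<bullet> outcome_vertex \<mu> (env_R e) A
            \<noteq> utility_weights \<mu> (env_S e) \<bullet> outcome_vertex \<mu> (env_R e) B"
      and "p \<in> optimal_outcomes \<mu> (env_S e) (env_R e)" "q \<in> optimal_outcomes \<mu> (env_S e) (env_R e)"
    then show "p = q"
      using distinct_maximizers_imp_gram_solutions[OF compact_obedient_outcomes[unfolded obedient_outcomes_def]]
      unfolding optimal_outcomes_def obedient_outcomes_def outcome_vertex_def by (metis vec_eq_iff)
  qed
qed

lemma AE_generic: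
  assumes "\<And>w. 0 < \<mu> w"
  shows "AE e in environment_measure. generic \<mu> (env_S e) (env_R e)"
  using AE_env_S_inj AE_env_R_never_indifferent[OF assms] AE_unique_optimal_outcome[OF assms]
  by eventually_elim (simp add: generic_def)

lemma unit_cube_PiM_lborel:
  defines "C \<equiv> {x :: 'i::finite \<Rightarrow> real. \<forall>i. x i \<in> {0..1}}"
  shows "C \<in> sets (PiM UNIV (\<lambda>_. lborel))" and "emeasure (PiM UNIV (\<lambda>_. lborel)) C = 1"
proof -
  interpret product_sigma_finite "\<lambda>_ :: 'i. lborel"
    by standard
  have C: "C = PiE UNIV (\<lambda>_. {0..1})"
    by (auto simp: C_def)
  show "C \<in> sets (PiM UNIV (\<lambda>_. lborel))"
    unfolding C by (intro sets_PiM_I_finite) auto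
  show "emeasure (PiM UNIV (\<lambda>_. lborel)) C = 1"
    unfolding C by (subst emeasure_PiM) auto
qed

theorem theorem1:
  fixes \<mu>0 :: "'w::finite \<Rightarrow> real"
  assumes "\<forall>w. \<mu>0 w > 0"
    and "(\<Sum>w\<in>UNIV. \<mu>0 w) = 1"
    and "CARD('m::finite) > max CARD('w) CARD('a::finite)"
  shows "\<exists>E \<in> sets (PiM (UNIV :: (bool \<times> 'a \<times> 'w) set) (\<lambda>_. lborel)).
           E \<subseteq> {e. \<forall>i. e i \<in> {0..1}} \<and>
           emeasure (PiM (UNIV :: (bool \<times> 'a \<times> 'w) set) (\<lambda>_. lborel)) E = 1 \<and>
           (\<forall>e\<in>E. commitment_valuable TYPE('m) \<mu>0 (env_S e) (env_R e)
                   \<longleftrightarrow> values_randomization TYPE('m) \<mu>0 (env_S e) (env_R e))"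
proof -
  let ?M = "PiM (UNIV :: (bool \<times> 'a \<times> 'w) set) (\<lambda>_. lborel)"
  let ?C = "{e :: bool \<times> 'a \<times> 'w \<Rightarrow> real. \<forall>i. e i \<in> {0..1}}"
  have \<mu>: "\<And>w. 0 < \<mu>0 w" and card: "CARD('a) \<le> CARD('m)"
    using assms(1,3) by auto
  obtain N where generic: "\<And>e. e \<in> space ?M - N \<Longrightarrow> generic \<mu>0 (env_S e) (env_R e)"
    and N: "N \<in> null_sets ?M"
    using AE_generic[of \<mu>0, OF \<mu>] by (elim AE_E3) blast
  have C: "?C \<in> sets ?M" "emeasure ?M ?C = 1"
    by (rule unit_cube_PiM_lborel)+
  have "?C - N \<in> sets ?M"
    using C(1) null_setsD2[OF N] by (rule sets.Diff)
  moreover have "emeasure ?M (?C - N) = 1"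
    using emeasure_Diff_null_set[OF N C(1)] C(2) by simp
  moreover have "commitment_valuable TYPE('m) \<mu>0 (env_S e) (env_R e)
      \<longleftrightarrow> values_randomization TYPE('m) \<mu>0 (env_S e) (env_R e)" if "e \<in> ?C - N" for e
    using commitment_valuable_iff_values_randomization_if_generic[OF card \<mu> generic] that
    by (simp add: space_PiM)
  ultimately show ?thesis
    by (intro bexI[of _ "?C - N"]) auto
qed

end
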